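(* Let $n\ge 2$ and let $\Delta'$ be the simplicial complex on the vertex set $\{(i,j)\in[n]^2: i\ne j\}$ whose faces are the sets $F$ such that $\prod_{(i,j)\in F}x_{ij}\notin H(2,n)$, where $H(2,n)$ is as described in the context. Order the facets of $\Delta'$ as follows: if $F$ is a facet of $\Delta_R$ and $G$ is a facet of $\Delta_S$, then $F<G$ iff $R<S$ in the order on subsets described in the context, or $R=S$ and $F<G$ in the standard order of paths of the grid $R\times([n]\setminus R)$. Then this total order is a two-way shelling of $\Delta'$ (both it and its reverse are shellings). More precisely, for every facet $F$ of $\Delta'$ that is not the minimal facet, $$\langle F\rangle\cap\langle G: G<F\rangle=\langle F\setminus\{x\}: x\in F^-\rangle,$$ and for every facet $F$ that is not the maximal facet, $$\langle F\rangle\cap\langle G: G>F\rangle=\langle F\setminus\{x\}: x\in F^+\rangle.$$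
   Context: $H(2,n)\subset K[x_{ij}:1\le i,j\le n]$ is the monomial ideal generated by, for all $i<h$ and $j<k$: $x_{ik}x_{hj}$ whenever $i=j$ or $h=k$, and $x_{ij}x_{hk}$ whenever $i\ne j$ and $h\ne k$. For sets $F_1,\dots,F_k$, $\langle F_1,\dots,F_k\rangle$ denotes the smallest simplicial complex containing them. For a nonempty proper subset $R\subset[n]$, $\Delta_R=\{F\in\Delta': F\subseteq R\times([n]\setminus R)\}$. Write $R=\{r_1<\dots<r_p\}$, $[n]\setminus R=\{c_1<\dots<c_{q}\}$ and view $R\times([n]\setminus R)$ as a grid with row $r_1$ on top and column $c_1$ on the left. A path in this grid is a sequence of positions starting at $(r_p,c_1)$ (bottom left) and ending at $(r_1,c_q)$ (top right), each step going either horizontally right ($(r_a,c_b)\to(r_a,c_{b+1})$) or vertically up ($(r_a,c_b)\to(r_{a-1},c_b)$). It is a fact (established in the paper) that the facets of $\Delta_R$ are exactly these paths, and every facet of $\Delta'$ is a facet of $\Delta_R$ for exactly one $R$. Types of points of a path $F$: a point is a left turn if the step into it is horizontal and the step out of it is vertical; a right turn if the step into it is vertical and the step out is horizontal; every other point is the only point of $F$ in its column (type $\bullet$) or the only point of $F$ in its row (type $\circ$) (if both hold, i.e. the grid is $1\times1$, the point is regarded as type $\bullet$). Order on nonempty proper subsets written as increasing sequences: $S=\{a_1<\dots<a_s\}<R=\{b_1<\dots<b_t\}$ iff either $a_j<b_j$ for the smallest $j$ with $a_j\ne b_j$, or $s<t$ and $a_i=b_i$ for $i=1,\dots,s$. Standard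 order of paths in a fixed grid: $F<G$ iff at the first step (going from bottom left to top right) where they differ, the step of $F$ is vertical (and that of $G$ horizontal). For a facet $F$ of $\Delta_R$: $F^-$ consists of the left turns of $F$, the points of type $\bullet$ whose column index is $<\max(R)$, and the points of type $\circ$ whose row index is $\max(R)$; $F^+=F\setminus F^-$. *)

theory Defs
  imports "HOL-Library.Multiset"
begin

definition offdiag :: "nat \<Rightarrow> (nat \<times> nat) set" where
  "offdiag n = {(i,j). i \<in> {1..n} \<and> j \<in> {1..n} \<and> i \<noteq> j}"

text \<open>Monomials in the variables x_ij are represented by their exponent multisets
  over the index pairs (i,j). A monomial ideal is given by its set of monomial
  generators; a monomial lies in the monomial ideal iff some generator divides it.\<close>
definition in_monomial_ideal :: "'a multiset set \<Rightarrow> 'a multiset \<Rightarrow> bool" where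
  "in_monomial_ideal G m \<longleftrightarrow> (\<exists>g\<in>G. g \<subseteq># m)"

definition H2_gens :: "nat \<Rightarrow> (nat \<times> nat) multiset set" where
  "H2_gens n =
     {{#(i,k), (h,j)#} | i h j k. i \<in> {1..n} \<and> h \<in> {1..n} \<and> j \<in> {1..n} \<and> k \<in> {1..n}
          \<and> i < h \<and> j < k \<and> (i = j \<or> h = k)}
   \<union> {{#(i,j), (h,k)#} | i h j k. i \<in> {1..n} \<and> h \<in> {1..n} \<and> j \<in> {1..n} \<and> k \<in> {1..n}
          \<and> i < h \<and> j < k \<and> i \<noteq> j \<and> h \<noteq> k}"

definition Delta' :: "nat \<Rightarrow> (nat \<times> nat) set set" where
  "Delta' n = {F. F \<subseteq> offdiag n \<and> \<not> in_monomial_ideal (H2_gens n) (mset_set F)}"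

definition facets :: "'a set set \<Rightarrow> 'a set set" where
  "facets D = {F \<in> D. \<forall>G\<in>D. F \<subseteq> G \<longrightarrow> G = F}"

definition gen_complex :: "'a set set \<Rightarrow> 'a set set" where
  "gen_complex X = {H. \<exists>G\<in>X. H \<subseteq> G}"

definition DeltaR :: "nat \<Rightarrow> nat set \<Rightarrow> (nat \<times> nat) set set" where
  "DeltaR n R = {F \<in> Delta' n. F \<subseteq> R \<times> ({1..n} - R)}"

text \<open>Grid coordinates: rows r_1<...<r_p, columns c_1<...<c_q (0-indexed lists).\<close>
definition grid_rows :: "nat set \<Rightarrow> nat list" where
  "grid_rows R = sorted_list_of_set R"

definition grid_cols :: "nat \<Rightarrow> nat set \<Rightarrow> nat list" where
  "grid_cols n R = sorted_list_of_set ({1..n} - R)"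

text \<open>A path is encoded by its list of steps: True = vertical (up), False = horizontal (right).
  walk lists the index positions (row index, column index), 0-indexed.\<close>
fun walk :: "nat \<times> nat \<Rightarrow> bool list \<Rightarrow> (nat \<times> nat) list" where
  "walk (a,b) [] = [(a,b)]"
| "walk (a,b) (v # s) = (a,b) # walk (if v then (a - 1, b) else (a, b + 1)) s"

definition is_path_steps :: "nat \<Rightarrow> nat \<Rightarrow> bool list \<Rightarrow> bool" where
  "is_path_steps p q s \<longleftrightarrow> length s = (p - 1) + (q - 1) \<and> length (filter id s) = p - 1"

definition path_walk :: "nat set \<Rightarrow> bool list \<Rightarrow> (nat \<times> nat) list" where
  "path_walk R s = walk (card R - 1, 0) s"

definition path_pt :: "nat \<Rightarrow> nat set \<Rightarrow> nat \<times> nat \<Rightarrow> nat \<times> nat" where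
  "path_pt n R ab = (grid_rows R ! fst ab, grid_cols n R ! snd ab)"

definition path_set :: "nat \<Rightarrow> nat set \<Rightarrow> bool list \<Rightarrow> (nat \<times> nat) set" where
  "path_set n R s = path_pt n R ` set (path_walk R s)"

definition block :: "nat \<Rightarrow> (nat \<times> nat) set \<Rightarrow> nat set" where
  "block n F = (THE R. R \<noteq> {} \<and> R \<subset> {1..n} \<and> F \<in> facets (DeltaR n R))"

definition path_of :: "nat \<Rightarrow> (nat \<times> nat) set \<Rightarrow> bool list" where
  "path_of n F = (let R = block n F in
     THE s. is_path_steps (card R) (card ({1..n} - R)) s \<and> path_set n R s = F)"

definition subset_less :: "nat set \<Rightarrow> nat set \<Rightarrow> bool" where
  "subset_less S R \<longleftrightarrow> (let a = sorted_list_of_set S; b = sorted_list_of_set R in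
     (\<exists>j. j < length a \<and> j < length b \<and> take j a = take j b \<and> a ! j < b ! j)
     \<or> (length a < length b \<and> a = take (length a) b))"

definition steps_less :: "bool list \<Rightarrow> bool list \<Rightarrow> bool" where
  "steps_less s t \<longleftrightarrow> (\<exists>k. k < length s \<and> k < length t \<and> take k s = take k t \<and> s ! k \<and> \<not> t ! k)"

definition facet_less :: "nat \<Rightarrow> (nat \<times> nat) set \<Rightarrow> (nat \<times> nat) set \<Rightarrow> bool" where
  "facet_less n F G \<longleftrightarrow> subset_less (block n F) (block n G)
     \<or> (block n F = block n G \<and> steps_less (path_of n F) (path_of n G))"

definition left_turn :: "bool list \<Rightarrow> nat \<Rightarrow> bool" where
  "left_turn s k \<longleftrightarrow> 0 < k \<and> k < length s \<and> \<not> s ! (k - 1) \<and> s ! k"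

definition right_turn :: "bool list \<Rightarrow> nat \<Rightarrow> bool" where
  "right_turn s k \<longleftrightarrow> 0 < k \<and> k < length s \<and> s ! (k - 1) \<and> \<not> s ! k"

definition only_in_col :: "(nat \<times> nat) list \<Rightarrow> nat \<Rightarrow> bool" where
  "only_in_col w k \<longleftrightarrow> (\<forall>k'<length w. snd (w ! k') = snd (w ! k) \<longrightarrow> k' = k)"

definition only_in_row :: "(nat \<times> nat) list \<Rightarrow> nat \<Rightarrow> bool" where
  "only_in_row w k \<longleftrightarrow> (\<forall>k'<length w. fst (w ! k') = fst (w ! k) \<longrightarrow> k' = k)"

definition bullet_pt :: "bool list \<Rightarrow> (nat \<times> nat) list \<Rightarrow> nat \<Rightarrow> bool" where
  "bullet_pt s w k \<longleftrightarrow> \<not> left_turn s k \<and> \<not> right_turn s k \<and> only_in_col w k"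

definition circle_pt :: "bool list \<Rightarrow> (nat \<times> nat) list \<Rightarrow> nat \<Rightarrow> bool" where
  "circle_pt s w k \<longleftrightarrow> \<not> left_turn s k \<and> \<not> right_turn s k \<and> \<not> only_in_col w k \<and> only_in_row w k"

definition minus_part :: "nat \<Rightarrow> (nat \<times> nat) set \<Rightarrow> (nat \<times> nat) set" where
  "minus_part n F = (let R = block n F; s = path_of n F; w = path_walk R s in
     {path_pt n R (w ! k) | k. k < length w \<and>
        (left_turn s k
         \<or> (bullet_pt s w k \<and> grid_cols n R ! snd (w ! k) < Max R)
         \<or> (circle_pt s w k \<and> grid_rows R ! fst (w ! k) = Max R))})"

definition plus_part :: "nat \<Rightarrow> (nat \<times> nat) set \<Rightarrow> (nat \<times> nat) set" where
  "plus_part n F = F - minus_part n F"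

end

theory Submission
  imports Defs
begin

text \<open>
  A set of off-diagonal positions is a face of \<open>\<Delta>'\<close> iff its rows and columns are disjoint
  and no two of its points increase in both coordinates. Sending each rightmost point of a row to
  its row and every other point to its column shows that a face uses at least one index more than
  it has points, so facets have \<open>n - 1\<close> points and use every index as a row or as a column; hence
  they are exactly the lattice paths in the grids \<open>R \<times> ([n] - R)\<close>.

  For the shelling, an earlier facet \<open>G\<close> always misses a point of \<open>F\<^sup>-\<close>: if \<open>G\<close> lies in an
  earlier grid, the first index where the row sets differ yields a column of \<open>F\<close> that is a row of
  \<open>G\<close> or the row \<open>max R\<close> of \<open>F\<close> missing from \<open>G\<close>; in the same grid, the first left turn of
  \<open>F\<close> after the first step where the paths differ is not on \<open>G\<close>. Conversely every \<open>F - {x}\<close> with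
  \<open>x \<in> F\<^sup>-\<close> lies on an earlier facet: flip a left turn into a right turn, turn the column of a
  \<open>\<bullet>\<close> point into a new row, or turn the row \<open>max R\<close> of a \<open>\<circ>\<close> point into a column. The
  reverse order and \<open>F\<^sup>+\<close> are handled symmetrically.
\<close>

section \<open>Faces of \<open>\<Delta>'\<close>\<close>

definition face :: "nat \<Rightarrow> (nat \<times> nat) set \<Rightarrow> bool" where
  "face n F \<longleftrightarrow> F \<subseteq> {1..n} \<times> {1..n} \<and> fst ` F \<inter> snd ` F = {}
     \<and> (\<forall>x\<in>F. \<forall>y\<in>F. \<not> (fst x < fst y \<and> snd x < snd y))"

lemma finite_offdiag: "finite (offdiag n)"
  by (rule finite_subset[of _ "{1..n} \<times> {1..n}"]) (auto simp: offdiag_def)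

lemma pair_subseteq_mset_set_iff:
  assumes "finite F" "u \<noteq> v"
  shows "{#u, v#} \<subseteq># mset_set F \<longleftrightarrow> u \<in> F \<and> v \<in> F"
proof
  assume "{#u, v#} \<subseteq># mset_set F"
  then have "set_mset {#u, v#} \<subseteq> set_mset (mset_set F)" by (rule set_mset_mono)
  then show "u \<in> F \<and> v \<in> F" using assms by auto
next
  assume "u \<in> F \<and> v \<in> F"
  then have "mset_set {u, v} \<subseteq># mset_set F"
    by (intro subset_imp_msubset_mset_set) (use assms in auto)
  then show "{#u, v#} \<subseteq># mset_set F" using assms by simp
qed

lemma in_H2_if_pair:
  assumes F: "F \<subseteq> offdiag n" and uv: "u \<in> F" "v \<in> F" "fst u \<noteq> fst v" "{#u, v#} \<in> H2_gens n"
  shows "in_monomial_ideal (H2_gens n) (mset_set F)"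
proof -
  have "{#u, v#} \<subseteq># mset_set F"
    using uv pair_subseteq_mset_set_iff[OF finite_subset[OF F finite_offdiag], of u v] by auto
  then show ?thesis using uv(4) unfolding in_monomial_ideal_def by blast
qed

lemma in_H2_if_increasing_pair:
  assumes F: "F \<subseteq> offdiag n" and "(i, j) \<in> F" "(h, k) \<in> F" "i < h" "j < k"
  shows "in_monomial_ideal (H2_gens n) (mset_set F)"
proof (rule in_H2_if_pair[OF F assms(2,3)])
  show "fst (i, j) \<noteq> fst (h, k)" using \<open>i < h\<close> by simp
  show "{#(i, j), (h, k)#} \<in> H2_gens n"
    unfolding H2_gens_def
    by (intro UnI2 CollectI exI[of _ i] exI[of _ h] exI[of _ j] exI[of _ k])
       (use assms in \<open>auto simp: offdiag_def\<close>)
qed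

lemma in_H2_if_row_is_col:
  assumes F: "F \<subseteq> offdiag n" and ak: "(a, k) \<in> F" and ha: "(h, a) \<in> F"
  shows "in_monomial_ideal (H2_gens n) (mset_set F)"
proof -
  have ne: "a \<noteq> k" "h \<noteq> a" and r: "a \<in> {1..n}" "k \<in> {1..n}" "h \<in> {1..n}"
    using F ak ha by (auto simp: offdiag_def)
  consider "h < a" "k < a" | "h < a" "a < k" | "a < h" "a < k" | "a < h" "k < a"
    using ne by linarith
  then show ?thesis
  proof cases
    case 1
    have "{#(h, a), (a, k)#} \<in> H2_gens n" unfolding H2_gens_def
      by (intro UnI1 CollectI exI[of _ h] exI[of _ a] exI[of _ k] exI[of _ a]) (use 1 r in auto)
    then show ?thesis using in_H2_if_pair[OF F ha ak] 1 by simp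
  next
    case 2
    then show ?thesis using in_H2_if_increasing_pair[OF F ha ak] by simp
  next
    case 3
    have "{#(a, k), (h, a)#} \<in> H2_gens n" unfolding H2_gens_def
      by (intro UnI1 CollectI exI[of _ a] exI[of _ h] exI[of _ a] exI[of _ k]) (use 3 r in auto)
    then show ?thesis using in_H2_if_pair[OF F ak ha] 3 by simp
  next
    case 4
    then show ?thesis using in_H2_if_increasing_pair[OF F ak ha] by simp
  qed
qed

lemma not_in_H2_if_face:
  assumes f: "face n F"
  shows "\<not> in_monomial_ideal (H2_gens n) (mset_set F)"
proof
  have fin: "finite F" using f unfolding face_def by (meson finite_SigmaI finite_atLeastAtMost finite_subset)
  assume "in_monomial_ideal (H2_gens n) (mset_set F)"
  then obtain g where g: "g \<in> H2_gens n" "g \<subseteq># mset_set F" by (auto simp: in_monomial_ideal_def)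
  from g(1) show False unfolding H2_gens_def
  proof (elim UnE CollectE exE conjE)
    fix i h j k
    assume "g = {#(i, k), (h, j)#}" "i < h" "j < k" "i = j \<or> h = k"
    then have "(i, k) \<in> F \<and> (h, j) \<in> F" using g(2) pair_subseteq_mset_set_iff[OF fin] by auto
    then show False using \<open>i = j \<or> h = k\<close> f unfolding face_def by force
  next
    fix i h j k
    assume "g = {#(i, j), (h, k)#}" "i < h" "j < k"
    then have "(i, j) \<in> F \<and> (h, k) \<in> F" using g(2) pair_subseteq_mset_set_iff[OF fin] by auto
    then show False using \<open>i < h\<close> \<open>j < k\<close> f unfolding face_def by force
  qed
qed

lemma Delta'_iff_face: "F \<in> Delta' n \<longleftrightarrow> face n F"
proof
  assume "F \<in> Delta' n"
  then have F: "F \<subseteq> offdiag n" and ni: "\<not> in_monomial_ideal (H2_gens n) (mset_set F)"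
    by (auto simp: Delta'_def)
  have "fst ` F \<inter> snd ` F = {}"
    using in_H2_if_row_is_col[OF F] ni by (force simp: image_iff)
  moreover have "\<not> (fst x < fst y \<and> snd x < snd y)" if "x \<in> F" "y \<in> F" for x y
    using in_H2_if_increasing_pair[OF F, of "fst x" "snd x" "fst y" "snd y"] ni that by auto
  moreover have "F \<subseteq> {1..n} \<times> {1..n}" using F by (auto simp: offdiag_def)
  ultimately show "face n F" unfolding face_def by blast
next
  assume f: "face n F"
  then have "F \<subseteq> offdiag n" unfolding face_def offdiag_def by (force simp: disjoint_iff)
  then show "F \<in> Delta' n" using not_in_H2_if_face[OF f] by (simp add: Delta'_def)
qed

lemma face_finite: "face n F \<Longrightarrow> finite F"
  unfolding face_def by (meson finite_SigmaI finite_atLeastAtMost finite_subset)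

lemma face_not_increasing: "face n F \<Longrightarrow> x \<in> F \<Longrightarrow> y \<in> F \<Longrightarrow> \<not> (fst x < fst y \<and> snd x < snd y)"
  unfolding face_def by blast

lemma face_row_ne_col: "face n F \<Longrightarrow> x \<in> F \<Longrightarrow> y \<in> F \<Longrightarrow> fst x \<noteq> snd y"
  unfolding face_def by (metis disjoint_iff image_eqI)

lemma face_indices_subset: "face n F \<Longrightarrow> fst ` F \<union> snd ` F \<subseteq> {1..n}"
  unfolding face_def by auto

lemma face_subset: "face n F \<Longrightarrow> P \<subseteq> F \<Longrightarrow> face n P"
  unfolding face_def by blast

section \<open>Facets have \<open>n - 1\<close> points\<close>

definition row_end :: "(nat \<times> nat) set \<Rightarrow> nat \<times> nat \<Rightarrow> bool" where
  "row_end F x \<longleftrightarrow> (\<forall>y\<in>F. fst y = fst x \<longrightarrow> snd y \<le> snd x)"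

definition end_cols :: "(nat \<times> nat) set \<Rightarrow> nat set" where
  "end_cols F = {c \<in> snd ` F. \<forall>y\<in>F. snd y = c \<longrightarrow> row_end F y}"

definition end_label :: "(nat \<times> nat) set \<Rightarrow> nat \<times> nat \<Rightarrow> nat" where
  "end_label F x = (if row_end F x then fst x else snd x)"

lemma end_label_inj_on:
  assumes f: "face n F"
  shows "inj_on (end_label F) F"
proof (rule inj_onI)
  fix x y assume x: "x \<in> F" and y: "y \<in> F" and e: "end_label F x = end_label F y"
  show "x = y"
  proof (cases "row_end F x"; cases "row_end F y")
    assume "row_end F x" "row_end F y"
    then show ?thesis using e x y unfolding end_label_def row_end_def
      by (metis le_antisym prod_eqI)
  next
    assume "row_end F x" "\<not> row_end F y"
    then show ?thesis using e face_row_ne_col[OF f x y] by (simp add: end_label_def)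
  next
    assume "\<not> row_end F x" "row_end F y"
    then show ?thesis using e face_row_ne_col[OF f y x] by (simp add: end_label_def)
  next
    assume rx: "\<not> row_end F x" and ry: "\<not> row_end F y"
    then have col: "snd x = snd y" using e by (simp add: end_label_def)
    obtain x' where x': "x' \<in> F" "fst x' = fst x" "snd x < snd x'"
      using rx unfolding row_end_def by force
    obtain y' where y': "y' \<in> F" "fst y' = fst y" "snd y < snd y'"
      using ry unfolding row_end_def by force
    have "\<not> fst x < fst y" using face_not_increasing[OF f x y'(1)] y' col by simp
    moreover have "\<not> fst y < fst x" using face_not_increasing[OF f y x'(1)] x' col by simp
    ultimately show ?thesis using col by (simp add: prod_eq_iff)
  qed
qed

lemma end_label_image:
  assumes f: "face n F"
  shows "end_label F ` F = (fst ` F \<union> snd ` F) - end_cols F"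
proof (intro equalityI subsetI)
  fix z assume "z \<in> end_label F ` F"
  then obtain x where x: "x \<in> F" "z = end_label F x" by blast
  have "fst x \<notin> end_cols F" using face_row_ne_col[OF f x(1)] unfolding end_cols_def by auto
  moreover have "snd x \<notin> end_cols F" if "\<not> row_end F x" using that x unfolding end_cols_def by auto
  ultimately show "z \<in> (fst ` F \<union> snd ` F) - end_cols F" using x by (auto simp: end_label_def)
next
  fix z assume z: "z \<in> (fst ` F \<union> snd ` F) - end_cols F"
  show "z \<in> end_label F ` F"
  proof (cases "z \<in> fst ` F")
    case True
    define b where "b = Max (snd ` {y\<in>F. fst y = z})"
    have fin: "finite {y\<in>F. fst y = z}" using face_finite[OF f] by simp
    have "b \<in> snd ` {y\<in>F. fst y = z}" unfolding b_def using fin True by (intro Max_in) auto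
    then have zb: "(z, b) \<in> F" by force
    have "row_end F (z, b)" unfolding row_end_def b_def using fin by (auto intro: Max_ge)
    then show ?thesis using zb by (force simp: end_label_def)
  next
    case False
    then obtain y where "y \<in> F" "snd y = z" "\<not> row_end F y" using z unfolding end_cols_def by blast
    then show ?thesis by (force simp: end_label_def)
  qed
qed

lemma card_face_add_card_end_cols:
  assumes f: "face n F"
  shows "card F + card (end_cols F) = card (fst ` F \<union> snd ` F)"
proof -
  have fin: "finite (fst ` F \<union> snd ` F)" using face_finite[OF f] by simp
  have sub: "end_cols F \<subseteq> fst ` F \<union> snd ` F" unfolding end_cols_def by auto
  have "card F = card ((fst ` F \<union> snd ` F) - end_cols F)"
    using card_image[OF end_label_inj_on[OF f]] end_label_image[OF f] by simp
  also have "\<dots> = card (fst ` F \<union> snd ` F) - card (end_cols F)"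
    using sub fin by (meson card_Diff_subset finite_subset)
  finally show ?thesis using card_mono[OF fin sub] by linarith
qed

definition top_row :: "(nat \<times> nat) set \<Rightarrow> nat" where
  "top_row F = Min (fst ` F)"

definition top_col :: "(nat \<times> nat) set \<Rightarrow> nat" where
  "top_col F = Max (snd ` {y \<in> F. fst y = top_row F})"

lemma top_corner:
  assumes f: "face n F" and ne: "F \<noteq> {}"
  shows "(top_row F, top_col F) \<in> F" "\<And>y. y \<in> F \<Longrightarrow> top_row F \<le> fst y"
    "\<And>y. y \<in> F \<Longrightarrow> fst y = top_row F \<Longrightarrow> snd y \<le> top_col F"
proof -
  have fin: "finite F" using face_finite[OF f] .
  show "\<And>y. y \<in> F \<Longrightarrow> top_row F \<le> fst y" unfolding top_row_def using fin by simp
  have "top_row F \<in> fst ` F" unfolding top_row_def using fin ne by simp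
  then have "{y \<in> F. fst y = top_row F} \<noteq> {}" by force
  then have "top_col F \<in> snd ` {y \<in> F. fst y = top_row F}" unfolding top_col_def
    using fin by (intro Max_in) auto
  then show "(top_row F, top_col F) \<in> F" by force
  show "\<And>y. y \<in> F \<Longrightarrow> fst y = top_row F \<Longrightarrow> snd y \<le> top_col F"
    unfolding top_col_def using fin by (intro Max_ge) auto
qed

lemma top_col_in_end_cols:
  assumes f: "face n F" and ne: "F \<noteq> {}"
  shows "top_col F \<in> end_cols F"
proof -
  note t = top_corner[OF f ne]
  have "row_end F y" if y: "y \<in> F" "snd y = top_col F" for y
    unfolding row_end_def
  proof (intro ballI impI)
    fix z assume z: "z \<in> F" "fst z = fst y"
    show "snd z \<le> snd y"
    proof (cases "fst y = top_row F")
      case True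
      then show ?thesis using t(3)[OF z(1)] z y by simp
    next
      case False
      then have "top_row F < fst z" using t(2)[OF y(1)] z by simp
      then show ?thesis using face_not_increasing[OF f t(1) z(1)] y by simp
    qed
  qed
  then show ?thesis unfolding end_cols_def using t(1) by force
qed

lemma card_face_less_card_indices:
  assumes f: "face n F" and ne: "F \<noteq> {}"
  shows "card F < card (fst ` F \<union> snd ` F)"
proof -
  have "finite (end_cols F)" using face_finite[OF f] unfolding end_cols_def by simp
  then have "card (end_cols F) > 0" using top_col_in_end_cols[OF f ne] card_gt_0_iff by blast
  then show ?thesis using card_face_add_card_end_cols[OF f] by linarith
qed

lemma card_face_le: "face n F \<Longrightarrow> card F \<le> n - 1"
  using card_face_less_card_indices card_mono[OF _ face_indices_subset] by fastforce

lemma face_indices_eq: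
  assumes f: "face n F" and c: "card F = n - 1" and n: "n \<ge> 2"
  shows "fst ` F \<union> snd ` F = {1..n}"
proof -
  have "F \<noteq> {}" using c n by auto
  then have "card (fst ` F \<union> snd ` F) \<ge> card {1..n}"
    using card_face_less_card_indices[OF f] c n by simp
  then show ?thesis using face_indices_subset[OF f] by (simp add: card_seteq)
qed

lemma face_insertI:
  assumes f: "face n F" and ab: "a \<in> {1..n}" "b \<in> {1..n}" "a \<noteq> b"
    and fresh: "a \<notin> snd ` F" "b \<notin> fst ` F"
    and anti: "\<And>y. y \<in> F \<Longrightarrow> \<not> (fst y < a \<and> snd y < b) \<and> \<not> (a < fst y \<and> b < snd y)"
  shows "face n (insert (a, b) F)"
  using f ab fresh anti unfolding face_def by auto

lemma face_insert_new_row: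
  assumes f: "face n F" and ne: "F \<noteq> {}" and t: "t \<in> {1..n}" "t \<notin> fst ` F" "t \<notin> snd ` F"
  shows "\<exists>d\<in>snd ` F. face n (insert (t, d) F)"
proof -
  have fin: "finite F" using face_finite[OF f] .
  define A where "A = {y\<in>F. fst y < t}"
  define B where "B = {y\<in>F. t < fst y}"
  define d where "d = (if A \<noteq> {} then Min (snd ` A) else Max (snd ` B))"
  have finAB: "finite A" "finite B" using fin by (auto simp: A_def B_def)
  have AB: "F = A \<union> B" using t(2) by (force simp: A_def B_def)
  have dA: "A \<noteq> {} \<Longrightarrow> d \<in> snd ` A" and dB: "A = {} \<Longrightarrow> d \<in> snd ` B"
    unfolding d_def using finAB AB ne by auto
  have dF: "d \<in> snd ` F" using dA dB by (auto simp: A_def B_def)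
  have below: "\<not> (t < fst y \<and> d < snd y)" if y: "y \<in> F" for y
  proof
    assume c: "t < fst y \<and> d < snd y"
    show False
    proof (cases "A = {}")
      case False
      then obtain y0 where "y0 \<in> A" "snd y0 = d" using dA by force
      then show False using face_not_increasing[OF f _ y, of y0] c by (auto simp: A_def)
    next
      case True
      then have "y \<in> B" using c y by (auto simp: B_def)
      then have "snd y \<le> d" unfolding d_def using True finAB by simp
      then show False using c by simp
    qed
  qed
  have above: "\<not> (fst y < t \<and> snd y < d)" if "y \<in> F" for y
  proof
    assume c: "fst y < t \<and> snd y < d"
    then have "y \<in> A" using that by (simp add: A_def)
    then have "d \<le> snd y" unfolding d_def using finAB by auto
    then show False using c by simp
  qed
  have "face n (insert (t, d) F)"
  proof (rule face_insertI[OF f t(1)])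
    show "d \<in> {1..n}" using dF face_indices_subset[OF f] by blast
    show "t \<noteq> d" "d \<notin> fst ` F" using dF t(3) face_row_ne_col[OF f] by force+
  qed (use t(3) below above in auto)
  then show ?thesis using dF by blast
qed

lemma face_insert_new_col:
  assumes f: "face n F" and ne: "F \<noteq> {}" and t: "t \<in> {1..n}" "t \<notin> fst ` F" "t \<notin> snd ` F"
  shows "\<exists>e\<in>fst ` F. face n (insert (e, t) F)"
proof -
  have fin: "finite F" using face_finite[OF f] .
  define A where "A = {y\<in>F. t < snd y}"
  define B where "B = {y\<in>F. snd y < t}"
  define e where "e = (if A \<noteq> {} then Max (fst ` A) else Min (fst ` B))"
  have finAB: "finite A" "finite B" using fin by (auto simp: A_def B_def)
  have AB: "F = A \<union> B" using t(3) by (force simp: A_def B_def)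
  have eA: "A \<noteq> {} \<Longrightarrow> e \<in> fst ` A" and eB: "A = {} \<Longrightarrow> e \<in> fst ` B"
    unfolding e_def using finAB AB ne by auto
  have eF: "e \<in> fst ` F" using eA eB by (auto simp: A_def B_def)
  have left: "\<not> (fst y < e \<and> snd y < t)" if y: "y \<in> F" for y
  proof
    assume c: "fst y < e \<and> snd y < t"
    show False
    proof (cases "A = {}")
      case False
      then obtain y0 where "y0 \<in> A" "fst y0 = e" using eA by force
      then show False using face_not_increasing[OF f y, of y0] c by (auto simp: A_def)
    next
      case True
      then have "y \<in> B" using c y by (auto simp: B_def)
      then have "e \<le> fst y" unfolding e_def using True finAB by simp
      then show False using c by simp
    qed
  qed
  have right: "\<not> (e < fst y \<and> t < snd y)" if "y \<in> F" for y
  proof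
    assume c: "e < fst y \<and> t < snd y"
    then have "y \<in> A" using that by (simp add: A_def)
    then have "fst y \<le> e" unfolding e_def using finAB by auto
    then show False using c by simp
  qed
  have "face n (insert (e, t) F)"
  proof (rule face_insertI[OF f _ t(1)])
    show "e \<in> {1..n}" using eF face_indices_subset[OF f] by blast
    show "e \<noteq> t" "e \<notin> snd ` F" using eF t(2) face_row_ne_col[OF f] by force+
  qed (use t(2) left right in auto)
  then show ?thesis using eF by blast
qed

text \<open>The column \<open>c\<close> extends up to the nearest row of \<open>F\<close> above its topmost point.\<close>

lemma face_insert_end_col:
  assumes f: "face n F" and ne: "F \<noteq> {}" and c: "c \<in> end_cols F" "c \<noteq> top_col F"
  shows "\<exists>y. y \<notin> F \<and> face n (insert y F)"
proof -
  note t = top_corner[OF f ne]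
  have fin: "finite F" using face_finite[OF f] .
  define C where "C = fst ` {y\<in>F. snd y = c}"
  have "C \<noteq> {}" using c unfolding C_def end_cols_def by auto
  then have a1C: "Min C \<in> C" and a1min: "\<And>y. y \<in> F \<Longrightarrow> snd y = c \<Longrightarrow> Min C \<le> fst y"
    using fin by (auto simp: C_def)
  define a1 where "a1 = Min C"
  have a1F: "(a1, c) \<in> F" using a1C unfolding C_def a1_def by force
  have end1: "row_end F (a1, c)" using c a1F unfolding end_cols_def by auto
  have "a1 \<noteq> top_row F"
  proof
    assume e: "a1 = top_row F"
    have "c \<le> top_col F" using t(3)[OF a1F] e by simp
    moreover have "top_col F \<le> c" using end1 t(1) e unfolding row_end_def by force
    ultimately show False using c by simp
  qed
  then have "top_row F < a1" using t(2)[OF a1F] by simp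
  then have neD: "{a \<in> fst ` F. a < a1} \<noteq> {}" using t(1) by force
  define a2 where "a2 = Max {a \<in> fst ` F. a < a1}"
  have a2: "a2 \<in> fst ` F" "a2 < a1" using Max_in[OF _ neD] fin by (auto simp: a2_def)
  have a2max: "a \<le> a2" if "a \<in> fst ` F" "a < a1" for a
    unfolding a2_def using that fin by (intro Max_ge) auto
  have cF: "c \<in> snd ` F" using c unfolding end_cols_def by auto
  have "face n (insert (a2, c) F)"
  proof (rule face_insertI[OF f])
    show "a2 \<in> {1..n}" "c \<in> {1..n}" using a2(1) cF face_indices_subset[OF f] by blast+
    show "a2 \<noteq> c" "a2 \<notin> snd ` F" "c \<notin> fst ` F" using a2(1) cF face_row_ne_col[OF f] by force+
    fix y assume y: "y \<in> F"
    have "\<not> (fst y < a2 \<and> snd y < c)" using face_not_increasing[OF f y a1F] a2 by auto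
    moreover have "\<not> (a2 < fst y \<and> c < snd y)"
    proof
      assume l: "a2 < fst y \<and> c < snd y"
      then have "a1 \<le> fst y" using a2max[of "fst y"] y by force
      then show False
        using end1 face_not_increasing[OF f a1F y] y l unfolding row_end_def by force
    qed
    ultimately show "\<not> (fst y < a2 \<and> snd y < c) \<and> \<not> (a2 < fst y \<and> c < snd y)" by blast
  qed
  moreover have "(a2, c) \<notin> F"
  proof
    assume "(a2, c) \<in> F"
    then have "a1 \<le> a2" using a1min unfolding a1_def by fastforce
    then show False using a2 by simp
  qed
  ultimately show ?thesis by blast
qed

lemma face_extend:
  assumes f: "face n F" and c: "card F < n - 1" and n: "n \<ge> 2"
  shows "\<exists>y. y \<notin> F \<and> face n (insert y F)"
proof (cases "F = {}")
  case True
  have "face n {(1, 2)}" unfolding face_def using n by auto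
  then show ?thesis using True by auto
next
  case ne: False
  show ?thesis
  proof (cases "\<exists>t\<in>{1..n}. t \<notin> fst ` F \<and> t \<notin> snd ` F")
    case True
    then obtain t where t: "t \<in> {1..n}" "t \<notin> fst ` F" "t \<notin> snd ` F" by blast
    from face_insert_new_row[OF f ne t] obtain d where "face n (insert (t, d) F)" by blast
    moreover have "(t, d) \<notin> F" using t by force
    ultimately show ?thesis by blast
  next
    case False
    then have "{1..n} \<subseteq> fst ` F \<union> snd ` F" by blast
    then have "fst ` F \<union> snd ` F = {1..n}" using face_indices_subset[OF f] by (rule subset_antisym[rotated])
    then have two: "card (end_cols F) \<ge> 2" using card_face_add_card_end_cols[OF f] c by simp
    have "\<not> end_cols F \<subseteq> {top_col F}"
    proof
      assume "end_cols F \<subseteq> {top_col F}"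
      then have "card (end_cols F) \<le> card {top_col F}" by (intro card_mono) auto
      then show False using two by simp
    qed
    then obtain c1 where "c1 \<in> end_cols F" "c1 \<noteq> top_col F" by blast
    then show ?thesis using face_insert_end_col[OF f ne] by blast
  qed
qed

lemma mem_facets_iff: "F \<in> facets D \<longleftrightarrow> F \<in> D \<and> (\<forall>G\<in>D. F \<subseteq> G \<longrightarrow> G = F)"
  unfolding facets_def by (rule mem_Collect_eq)

lemma facets_Delta'_iff:
  assumes n: "n \<ge> 2"
  shows "F \<in> facets (Delta' n) \<longleftrightarrow> face n F \<and> card F = n - 1"
proof
  assume F: "F \<in> facets (Delta' n)"
  then have f: "face n F" and mx: "\<And>G. G \<in> Delta' n \<Longrightarrow> F \<subseteq> G \<Longrightarrow> G = F"
    unfolding mem_facets_iff by (auto simp only: Delta'_iff_face)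
  have "\<not> card F < n - 1"
  proof
    assume "card F < n - 1"
    from face_extend[OF f this n] obtain y where "y \<notin> F" "face n (insert y F)" by blast
    then show False using mx[of "insert y F"] Delta'_iff_face by auto
  qed
  then show "face n F \<and> card F = n - 1" using f card_face_le[OF f] by simp
next
  assume "face n F \<and> card F = n - 1"
  then have f: "face n F" and c: "card F = n - 1" by auto
  have "G = F" if "G \<in> Delta' n" "F \<subseteq> G" for G
  proof -
    have g: "face n G" using that(1) Delta'_iff_face by auto
    show ?thesis using card_seteq[OF face_finite[OF g] that(2)] card_face_le[OF g] c by simp
  qed
  then show "F \<in> facets (Delta' n)" unfolding mem_facets_iff using f Delta'_iff_face by auto
qed

section \<open>Lattice paths\<close>

definition ups :: "bool list \<Rightarrow> nat \<Rightarrow> nat" where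
  "ups s k = length (filter id (take k s))"

definition rights :: "bool list \<Rightarrow> nat \<Rightarrow> nat" where
  "rights s k = length (filter Not (take k s))"

lemma ups_0 [simp]: "ups s 0 = 0" and rights_0 [simp]: "rights s 0 = 0"
  by (simp_all add: ups_def rights_def)

lemma ups_add_rights: "k \<le> length s \<Longrightarrow> ups s k + rights s k = k"
  unfolding ups_def rights_def using sum_length_filter_compl[of id "take k s"] by (simp add: comp_def)

lemma ups_Suc: "k < length s \<Longrightarrow> ups s (Suc k) = ups s k + (if s ! k then 1 else 0)"
  unfolding ups_def by (simp add: take_Suc_conv_app_nth)

lemma rights_Suc: "k < length s \<Longrightarrow> rights s (Suc k) = rights s k + (if s ! k then 0 else 1)"
  unfolding rights_def by (simp add: take_Suc_conv_app_nth)

lemma ups_mono: "k \<le> k' \<Longrightarrow> ups s k \<le> ups s k'"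
  unfolding ups_def by (metis le_add_diff_inverse take_add filter_append length_append le_add1)

lemma rights_mono: "k \<le> k' \<Longrightarrow> rights s k \<le> rights s k'"
  unfolding rights_def by (metis le_add_diff_inverse take_add filter_append length_append le_add1)

lemma ups_length: "ups s (length s) = length (filter id s)"
  unfolding ups_def by simp

lemma ups_le: "k \<le> length s \<Longrightarrow> ups s k \<le> length (filter id s)"
  using ups_mono[of k "length s" s] ups_length by simp

lemma rights_le: "k \<le> length s \<Longrightarrow> rights s k \<le> length s - length (filter id s)"
  using rights_mono[of k "length s" s] ups_add_rights[of "length s" s] ups_length[of s] by simp

lemma ups_rights_inj:
  "k \<le> length s \<Longrightarrow> k' \<le> length s \<Longrightarrow> ups s k = ups s k' \<Longrightarrow> rights s k = rights s k' \<Longrightarrow> k = k'"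
  using ups_add_rights by metis

lemma ups_rights_take: "take k s = take k t \<Longrightarrow> ups s k = ups t k \<and> rights s k = rights t k"
  unfolding ups_def rights_def by simp

lemma length_walk [simp]: "length (walk ab s) = Suc (length s)"
  by (induction ab s rule: walk.induct) auto

lemma walk_nth: "k \<le> length s \<Longrightarrow> walk (a, b) s ! k = (a - ups s k, b + rights s k)"
proof (induction s arbitrary: a b k)
  case Nil
  then show ?case by simp
next
  case (Cons v s)
  show ?case
  proof (cases k)
    case (Suc k')
    then have "ups (v # s) k = (if v then 1 else 0) + ups s k'"
      "rights (v # s) k = (if v then 0 else 1) + rights s k'"
      by (simp_all add: ups_def rights_def)
    then show ?thesis using Cons Suc by (cases v) auto
  qed simp
qed

lemma set_walk: "set (walk (a, b) s) = (\<lambda>k. (a - ups s k, b + rights s k)) ` {..length s}"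
proof -
  have "set (walk (a, b) s) = (!) (walk (a, b) s) ` {..length s}"
    by (auto simp: set_conv_nth less_Suc_eq_le)
  also have "\<dots> = (\<lambda>k. (a - ups s k, b + rights s k)) ` {..length s}"
    by (rule image_cong) (simp_all add: walk_nth)
  finally show ?thesis .
qed

lemma ups_const: "j \<le> j' \<Longrightarrow> j' \<le> length s \<Longrightarrow> (\<forall>i. j \<le> i \<and> i < j' \<longrightarrow> \<not> s ! i) \<Longrightarrow> ups s j' = ups s j"
proof (induction j' rule: dec_induct)
  case base then show ?case by simp
next
  case (step m)
  then have "ups s m = ups s j" by simp
  moreover have "\<not> s ! m" using step by simp
  ultimately show ?case using ups_Suc[of m s] step by simp
qed

lemma rights_const: "j \<le> j' \<Longrightarrow> j' \<le> length s \<Longrightarrow> (\<forall>i. j \<le> i \<and> i < j' \<longrightarrow> s ! i) \<Longrightarrow> rights s j' = rights s j"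
proof (induction j' rule: dec_induct)
  case base then show ?case by simp
next
  case (step m)
  then have "rights s m = rights s j" by simp
  moreover have "s ! m" using step by simp
  ultimately show ?case using rights_Suc[of m s] step by simp
qed

lemma ups_increase: "j \<le> j' \<Longrightarrow> j' \<le> length s \<Longrightarrow> ups s j < ups s j' \<Longrightarrow> \<exists>i. j \<le> i \<and> i < j' \<and> s ! i"
  using ups_const by fastforce

lemma rights_increase: "j \<le> j' \<Longrightarrow> j' \<le> length s \<Longrightarrow> rights s j < rights s j' \<Longrightarrow> \<exists>i. j \<le> i \<and> i < j' \<and> \<not> s ! i"
  using rights_const by fastforce

lemma ups_less: "j < j' \<Longrightarrow> j' \<le> length s \<Longrightarrow> s ! j \<Longrightarrow> ups s j < ups s j'"
proof -
  assume a: "j < j'" "j' \<le> length s" "s ! j"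
  have "ups s (Suc j) = ups s j + 1" using ups_Suc[of j s] a by simp
  moreover have "ups s (Suc j) \<le> ups s j'" using ups_mono a by simp
  ultimately show ?thesis by simp
qed

lemma rights_less: "j < j' \<Longrightarrow> j' \<le> length s \<Longrightarrow> \<not> s ! j \<Longrightarrow> rights s j < rights s j'"
proof -
  assume a: "j < j'" "j' \<le> length s" "\<not> s ! j"
  have "rights s (Suc j) = rights s j + 1" using rights_Suc[of j s] a by simp
  moreover have "rights s (Suc j) \<le> rights s j'" using rights_mono a by simp
  ultimately show ?thesis by simp
qed

lemma rights_unique_iff:
  assumes k: "k \<le> length s"
  shows "(\<forall>k'\<le>length s. rights s k' = rights s k \<longrightarrow> k' = k) \<longleftrightarrow>
    ((k = 0 \<or> \<not> s ! (k - 1)) \<and> (k = length s \<or> \<not> s ! k))"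
proof
  assume u: "\<forall>k'\<le>length s. rights s k' = rights s k \<longrightarrow> k' = k"
  have "\<not> s ! (k - 1)" if "0 < k"
  proof
    assume "s ! (k - 1)"
    then have "rights s (k - 1) = rights s k" using rights_Suc[of "k - 1" s] that k by simp
    then have "k - 1 = k" using u[rule_format, of "k - 1"] k by simp
    then show False using that by simp
  qed
  moreover have "\<not> s ! k" if "k < length s"
    using u[rule_format, of "Suc k"] rights_Suc[of k s] that by auto
  ultimately show "(k = 0 \<or> \<not> s ! (k - 1)) \<and> (k = length s \<or> \<not> s ! k)" using k by force
next
  assume c: "(k = 0 \<or> \<not> s ! (k - 1)) \<and> (k = length s \<or> \<not> s ! k)"
  show "\<forall>k'\<le>length s. rights s k' = rights s k \<longrightarrow> k' = k"
  proof (intro allI impI)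
    fix k' assume k': "k' \<le> length s" "rights s k' = rights s k"
    have "\<not> k < k'" using rights_less[of k k' s] c k' by auto
    moreover have "\<not> k' < k"
    proof
      assume "k' < k"
      then have "rights s k' \<le> rights s (k - 1)" by (intro rights_mono) simp
      also have "\<dots> < rights s k" using rights_less[of "k - 1" k s] c k \<open>k' < k\<close> by auto
      finally show False using k' by simp
    qed
    ultimately show "k' = k" by simp
  qed
qed

lemma ups_unique_iff:
  assumes k: "k \<le> length s"
  shows "(\<forall>k'\<le>length s. ups s k' = ups s k \<longrightarrow> k' = k) \<longleftrightarrow>
    ((k = 0 \<or> s ! (k - 1)) \<and> (k = length s \<or> s ! k))"
proof
  assume u: "\<forall>k'\<le>length s. ups s k' = ups s k \<longrightarrow> k' = k"
  have "s ! (k - 1)" if "0 < k"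
  proof (rule ccontr)
    assume "\<not> s ! (k - 1)"
    then have "ups s (k - 1) = ups s k" using ups_Suc[of "k - 1" s] that k by simp
    then have "k - 1 = k" using u[rule_format, of "k - 1"] k by simp
    then show False using that by simp
  qed
  moreover have "s ! k" if "k < length s"
    using u[rule_format, of "Suc k"] ups_Suc[of k s] that by (auto split: if_splits)
  ultimately show "(k = 0 \<or> s ! (k - 1)) \<and> (k = length s \<or> s ! k)" using k by force
next
  assume c: "(k = 0 \<or> s ! (k - 1)) \<and> (k = length s \<or> s ! k)"
  show "\<forall>k'\<le>length s. ups s k' = ups s k \<longrightarrow> k' = k"
  proof (intro allI impI)
    fix k' assume k': "k' \<le> length s" "ups s k' = ups s k"
    have "\<not> k < k'" using ups_less[of k k' s] c k' by auto
    moreover have "\<not> k' < k"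
    proof
      assume "k' < k"
      then have "ups s k' \<le> ups s (k - 1)" by (intro ups_mono) simp
      also have "\<dots> < ups s k" using ups_less[of "k - 1" k s] c k \<open>k' < k\<close> by auto
      finally show False using k' by simp
    qed
    ultimately show "k' = k" by simp
  qed
qed

lemma first_index_from:
  assumes "j \<le> i" "i < length s" "P (s ! i)"
  shows "\<exists>k. j \<le> k \<and> k < length s \<and> P (s ! k) \<and> (\<forall>l. j \<le> l \<longrightarrow> l < k \<longrightarrow> \<not> P (s ! l))"
proof -
  define Q where "Q k \<longleftrightarrow> j \<le> k \<and> k < length s \<and> P (s ! k)" for k
  obtain k where "Q k" "\<forall>m<k. \<not> Q m" using exists_least_iff[of Q] assms unfolding Q_def by blast
  then show ?thesis unfolding Q_def by (meson order.strict_trans)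
qed

lemma first_in_column:
  "k \<le> length s \<Longrightarrow> \<exists>k0\<le>k. rights s k0 = rights s k \<and> (k0 = 0 \<or> \<not> s ! (k0 - 1))"
proof (induction k)
  case (Suc k)
  show ?case
  proof (cases "s ! k")
    case True
    then have "rights s (Suc k) = rights s k" using rights_Suc[of k s] Suc.prems by simp
    then show ?thesis using Suc by (metis Suc_leD le_SucI)
  qed auto
qed auto

lemma first_in_row:
  "k \<le> length s \<Longrightarrow> \<exists>k0\<le>k. ups s k0 = ups s k \<and> (k0 = 0 \<or> s ! (k0 - 1))"
proof (induction k)
  case (Suc k)
  show ?case
  proof (cases "s ! k")
    case False
    then have "ups s (Suc k) = ups s k" using ups_Suc[of k s] Suc.prems by simp
    then show ?thesis using Suc by (metis Suc_leD le_SucI)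
  qed auto
qed auto

lemma last_in_column:
  assumes "k \<le> length s"
  shows "\<exists>k0. k \<le> k0 \<and> k0 \<le> length s \<and> rights s k0 = rights s k \<and> (k0 = length s \<or> \<not> s ! k0)"
  using assms
proof (induction k rule: inc_induct)
  case (step k)
  show ?case
  proof (cases "s ! k")
    case True
    then have "rights s (Suc k) = rights s k" using rights_Suc[of k s] step.hyps by simp
    then show ?thesis using step.IH by (metis Suc_leD)
  qed (use step.hyps in auto)
qed auto

definition antichain :: "(nat \<times> nat) set \<Rightarrow> bool" where
  "antichain I \<longleftrightarrow> (\<forall>x\<in>I. \<forall>y\<in>I. \<not> (fst x < fst y \<and> snd x < snd y))"

text \<open>The number of steps from the corner \<open>(a, b)\<close> is injective on an antichain in the box, so
  an antichain as large as a path must contain the corner.\<close>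

lemma antichain_contains_corner:
  assumes box: "I \<subseteq> {..a} \<times> {b..<q}" and anti: "antichain I"
    and card: "card I = Suc (a + (q - 1 - b))"
  shows "(a, b) \<in> I"
proof -
  define dist where "dist x = (a - fst x) + (snd x - b)" for x :: "nat \<times> nat"
  have inj: "inj_on dist I"
  proof (rule inj_onI)
    fix x y assume x: "x \<in> I" and y: "y \<in> I" and e: "dist x = dist y"
    have bx: "fst x \<le> a" "b \<le> snd x" "fst y \<le> a" "b \<le> snd y" using box x y by auto
    have "\<not> fst x < fst y"
    proof
      assume l: "fst x < fst y"
      then have "snd y \<le> snd x" using anti x y unfolding antichain_def by force
      then show False using e l bx unfolding dist_def by linarith
    qed
    moreover have "\<not> fst y < fst x"
    proof
      assume l: "fst y < fst x"
      then have "snd x \<le> snd y" using anti x y unfolding antichain_def by force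
      then show False using e l bx unfolding dist_def by linarith
    qed
    ultimately show "x = y" using e bx unfolding dist_def by (simp add: prod_eq_iff)
  qed
  have "dist x \<le> a + (q - 1 - b)" if "x \<in> I" for x
  proof -
    have "fst x \<le> a" "b \<le> snd x" "snd x < q" using box that by auto
    then show ?thesis unfolding dist_def by linarith
  qed
  then have "dist ` I \<subseteq> {..a + (q - 1 - b)}" by auto
  moreover have "card (dist ` I) = card {..a + (q - 1 - b)}" using card_image[OF inj] card by simp
  ultimately have "dist ` I = {..a + (q - 1 - b)}" by (simp add: card_subset_eq)
  then obtain x where "x \<in> I" "dist x = 0" by (metis atMost_iff imageE zero_le)
  then show ?thesis using box unfolding dist_def by (auto simp: prod_eq_iff)
qed

lemma antichain_minus_corner:
  assumes box: "I \<subseteq> {..a} \<times> {b..<q}" and anti: "antichain I"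
  shows "(\<forall>x\<in>I - {(a, b)}. fst x < a) \<or> (\<forall>x\<in>I - {(a, b)}. b < snd x)"
proof (rule ccontr)
  assume "\<not> ?thesis"
  then obtain x y where x: "x \<in> I" "x \<noteq> (a, b)" "\<not> fst x < a"
    and y: "y \<in> I" "y \<noteq> (a, b)" "\<not> b < snd y" by blast
  then have "fst x = a" "snd y = b" using box by auto
  then have "b < snd x" "fst y < a" using x y box by (auto simp: prod_eq_iff)
  then show False using anti x y \<open>fst x = a\<close> \<open>snd y = b\<close> unfolding antichain_def by force
qed

lemma antichain_eq_walk:
  "m = a + (q - 1 - b) \<Longrightarrow> b < q \<Longrightarrow> I \<subseteq> {..a} \<times> {b..<q} \<Longrightarrow> antichain I \<Longrightarrow> card I = Suc m \<Longrightarrow>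
   \<exists>s. length s = m \<and> length (filter id s) = a \<and> set (walk (a, b) s) = I"
proof (induction m arbitrary: a b I)
  case 0
  then obtain z where I: "I = {z}" by (metis One_nat_def card_1_singletonE)
  then show ?case using 0 by (intro exI[of _ "[]"]) auto
next
  case (Suc m)
  have ab: "(a, b) \<in> I" using antichain_contains_corner Suc.prems by simp
  define I' where "I' = I - {(a, b)}"
  have fin: "finite I" using Suc.prems(5) card.infinite by fastforce
  have I': "card I' = Suc m" "antichain I'" "I = insert (a, b) I'"
    using Suc.prems(4,5) ab fin by (auto simp: I'_def antichain_def)
  from antichain_minus_corner[OF Suc.prems(3,4)] show ?case
  proof
    assume up: "\<forall>x\<in>I - {(a, b)}. fst x < a"
    obtain x where "x \<in> I'" using I'(1) by (metis card.empty ex_in_conv nat.distinct(1))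
    then have a1: "a \<ge> 1" using up by (fastforce simp: I'_def)
    have "I' \<subseteq> {..a - 1} \<times> {b..<q}"
      using up Suc.prems(3) unfolding I'_def by (force simp: subset_iff)
    moreover have "m = (a - 1) + (q - 1 - b)" using Suc.prems(1) a1 by simp
    ultimately obtain s where "length s = m" "length (filter id s) = a - 1" "set (walk (a - 1, b) s) = I'"
      using Suc.IH Suc.prems(2) I' by blast
    then show ?thesis using I'(3) a1 by (intro exI[of _ "True # s"]) (auto simp: id_def)
  next
    assume right: "\<forall>x\<in>I - {(a, b)}. b < snd x"
    obtain x where x: "x \<in> I'" using I'(1) by (metis card.empty ex_in_conv nat.distinct(1))
    then have "b < snd x" "snd x < q" using right Suc.prems(3) by (auto simp: I'_def)
    then have b1: "b + 1 < q" by linarith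
    have "I' \<subseteq> {..a} \<times> {b + 1..<q}"
      using right Suc.prems(3) unfolding I'_def by (force simp: subset_iff)
    moreover have "m = a + (q - 1 - (b + 1))" using Suc.prems(1) b1 by simp
    ultimately obtain s where "length s = m" "length (filter id s) = a" "set (walk (a, b + 1) s) = I'"
      using Suc.IH b1 I' by blast
    then show ?thesis using I'(3) by (intro exI[of _ "False # s"]) (auto simp: id_def)
  qed
qed

lemma walk_eq_if_set_eq:
  assumes l: "length s = length s'" and c: "length (filter id s) \<le> a" "length (filter id s') \<le> a"
    and e: "set (walk (a, b) s) = set (walk (a, b) s')"
  shows "s = s'"
proof -
  have steps: "(a - fst (walk (a, b) t ! k)) + (snd (walk (a, b) t ! k) - b) = k"
    if "k \<le> length t" "length (filter id t) \<le> a" for t k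
    using walk_nth[OF that(1)] ups_add_rights[OF that(1)] ups_le[OF that(1)] that(2) by simp
  have same: "walk (a, b) s ! k = walk (a, b) s' ! k" if k: "k \<le> length s" for k
  proof -
    have "walk (a, b) s' ! k \<in> set (walk (a, b) s)" using e k l by (simp add: nth_mem less_Suc_eq_le)
    then obtain k' where "k' \<le> length s" "walk (a, b) s ! k' = walk (a, b) s' ! k"
      by (auto simp: in_set_conv_nth less_Suc_eq_le)
    moreover from this have "k' = k" using steps[of k' s] steps[of k s'] k l c by simp
    ultimately show ?thesis by simp
  qed
  have ups_eq: "ups s k = ups s' k" if k: "k \<le> length s" for k
  proof -
    have "a - ups s k = a - ups s' k" using same[OF k] walk_nth[OF k, of a b] walk_nth[of k s' a b] k l
      by simp
    moreover have "ups s k \<le> a" "ups s' k \<le> a" using ups_le[of k s] ups_le[of k s'] k l c by auto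
    ultimately show ?thesis by linarith
  qed
  show ?thesis
  proof (rule nth_equalityI[OF l])
    fix k assume k: "k < length s"
    then show "s ! k = s' ! k"
      using ups_eq[of k] ups_eq[of "Suc k"] ups_Suc[OF k] ups_Suc[of k s'] l by (auto split: if_splits)
  qed
qed

section \<open>Facets are lattice paths\<close>

lemma sorted_list_of_set_nth_less:
  "finite A \<Longrightarrow> i < j \<Longrightarrow> j < card A \<Longrightarrow> sorted_list_of_set A ! i < sorted_list_of_set A ! j"
  using sorted_wrt_nth_less[OF sorted_list_of_set.strict_sorted_key_list_of_set[of A]] by simp

lemma sorted_list_of_set_nth_less_iff: "finite A \<Longrightarrow> i < card A \<Longrightarrow> j < card A \<Longrightarrow>
    sorted_list_of_set A ! i < sorted_list_of_set A ! j \<longleftrightarrow> i < j"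
  by (metis less_asym linorder_neqE_nat sorted_list_of_set_nth_less)

lemma sorted_list_of_set_nth_le_iff: "finite A \<Longrightarrow> i < card A \<Longrightarrow> j < card A \<Longrightarrow>
    sorted_list_of_set A ! i \<le> sorted_list_of_set A ! j \<longleftrightarrow> i \<le> j"
  by (meson not_le sorted_list_of_set_nth_less_iff)

lemma sorted_list_of_set_nth_eq_iff: "finite A \<Longrightarrow> i < card A \<Longrightarrow> j < card A \<Longrightarrow>
    sorted_list_of_set A ! i = sorted_list_of_set A ! j \<longleftrightarrow> i = j"
  by (simp add: nth_eq_iff_index_eq)

lemma sorted_list_of_set_nth_mem: "finite A \<Longrightarrow> i < card A \<Longrightarrow> sorted_list_of_set A ! i \<in> A"
  by (metis nth_mem sorted_list_of_set.length_sorted_key_list_of_set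
      sorted_list_of_set.set_sorted_key_list_of_set)

lemma sorted_list_of_set_ex_nth: "finite A \<Longrightarrow> x \<in> A \<Longrightarrow> \<exists>i<card A. sorted_list_of_set A ! i = x"
  by (metis in_set_conv_nth sorted_list_of_set.length_sorted_key_list_of_set
      sorted_list_of_set.set_sorted_key_list_of_set)

lemma sorted_list_of_set_nth_last:
  assumes f: "finite A" and ne: "A \<noteq> {}"
  shows "sorted_list_of_set A ! (card A - 1) = Max A"
proof (rule Max_eqI[symmetric, OF f])
  have c: "card A > 0" using f ne by (simp add: card_gt_0_iff)
  then show "sorted_list_of_set A ! (card A - 1) \<in> A" using sorted_list_of_set_nth_mem[OF f] by simp
  fix x assume "x \<in> A"
  then obtain i where "i < card A" "sorted_list_of_set A ! i = x" using sorted_list_of_set_ex_nth[OF f] by blast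
  then show "x \<le> sorted_list_of_set A ! (card A - 1)" using sorted_list_of_set_nth_le_iff[OF f, of i "card A - 1"] c by simp
qed

definition path_point :: "nat \<Rightarrow> nat set \<Rightarrow> bool list \<Rightarrow> nat \<Rightarrow> nat \<times> nat" where
  "path_point n R s k = (grid_rows R ! (card R - 1 - ups s k), grid_cols n R ! rights s k)"

lemma path_walk_nth: "k \<le> length s \<Longrightarrow> path_walk R s ! k = (card R - 1 - ups s k, rights s k)"
  unfolding path_walk_def using walk_nth[of k s "card R - 1" 0] by simp

lemma path_pt_path_walk_nth: "k \<le> length s \<Longrightarrow> path_pt n R (path_walk R s ! k) = path_point n R s k"
  unfolding path_point_def path_pt_def using path_walk_nth by simp

lemma path_set_eq_image: "path_set n R s = path_point n R s ` {..length s}"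
proof -
  have "path_set n R s = path_pt n R ` set (path_walk R s)" by (simp add: path_set_def)
  also have "set (path_walk R s) = (\<lambda>k. path_walk R s ! k) ` {..length s}"
    unfolding path_walk_def by (auto simp: set_conv_nth less_Suc_eq_le image_iff)
  finally show ?thesis using path_pt_path_walk_nth by (simp add: image_image path_walk_def)
qed

definition is_path :: "nat \<Rightarrow> nat set \<Rightarrow> bool list \<Rightarrow> bool" where
  "is_path n R s \<longleftrightarrow> R \<noteq> {} \<and> R \<subseteq> {1..n} \<and> R \<noteq> {1..n}
     \<and> is_path_steps (card R) (card ({1..n} - R)) s"

lemma is_path_facts:
  assumes "is_path n R s"
  shows "finite R" "card R \<ge> 1" "card ({1..n} - R) \<ge> 1" "card R + card ({1..n} - R) = n"
    "length s = (card R - 1) + (card ({1..n} - R) - 1)" "length (filter id s) = card R - 1"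
    "{1..n} - R \<noteq> {}"
proof -
  have R: "R \<noteq> {}" "R \<subseteq> {1..n}" "R \<noteq> {1..n}" using assms by (auto simp: is_path_def)
  show f: "finite R" using R(2) finite_subset by blast
  show "card R \<ge> 1" using f R(1) by (simp add: Suc_leI card_gt_0_iff)
  show ne: "{1..n} - R \<noteq> {}" using R by blast
  show "card ({1..n} - R) \<ge> 1" using ne by (simp add: Suc_leI card_gt_0_iff)
  show "card R + card ({1..n} - R) = n"
    using card_Diff_subset[OF f R(2)] card_mono[OF _ R(2)] by simp
  show "length s = (card R - 1) + (card ({1..n} - R) - 1)" "length (filter id s) = card R - 1"
    using assms by (auto simp: is_path_def is_path_steps_def)
qed

lemma path_point_mem:
  assumes d: "is_path n R s" and k: "k \<le> length s"
  shows "card R - 1 - ups s k < card R" "rights s k < card ({1..n} - R)"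
    "fst (path_point n R s k) \<in> R" "snd (path_point n R s k) \<in> {1..n} - R"
proof -
  note b = is_path_facts[OF d]
  show i: "card R - 1 - ups s k < card R" using b by linarith
  have "rights s k \<le> length s - length (filter id s)" using rights_le[OF k] .
  then show j: "rights s k < card ({1..n} - R)" using b by linarith
  show "fst (path_point n R s k) \<in> R" unfolding path_point_def grid_rows_def using sorted_list_of_set_nth_mem[OF b(1) i] by simp
  show "snd (path_point n R s k) \<in> {1..n} - R" unfolding path_point_def grid_cols_def using sorted_list_of_set_nth_mem[OF _ j] by simp
qed

lemma path_point_eqD:
  assumes d: "is_path n R s" and d': "is_path n R t" and j: "j \<le> length s" and k: "k \<le> length t"
    and e: "path_point n R s j = path_point n R t k"
  shows "ups s j = ups t k" "rights s j = rights t k"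
proof -
  note b = is_path_facts[OF d] and b' = is_path_facts[OF d']
  note bj = path_point_mem[OF d j] and bk = path_point_mem[OF d' k]
  have "card R - 1 - ups s j = card R - 1 - ups t k"
    using e bj(1) bk(1) sorted_list_of_set_nth_eq_iff[OF b(1)] unfolding path_point_def grid_rows_def
    by simp
  moreover have "ups s j \<le> card R - 1" "ups t k \<le> card R - 1"
    using ups_le[OF j] ups_le[OF k] b(6) b'(6) by simp_all
  ultimately show "ups s j = ups t k" by linarith
  show "rights s j = rights t k"
    using e bj(2) bk(2) sorted_list_of_set_nth_eq_iff[of "{1..n} - R"]
    unfolding path_point_def grid_cols_def by simp
qed

lemma path_point_inj:
  assumes d: "is_path n R s" and k: "k \<le> length s" "k' \<le> length s"
    and e: "path_point n R s k = path_point n R s k'"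
  shows "k = k'"
  using path_point_eqD[OF d d k e] ups_rights_inj[OF k] by simp

lemma path_point_mono:
  assumes d: "is_path n R s" and k: "k \<le> k'" "k' \<le> length s"
  shows "fst (path_point n R s k') \<le> fst (path_point n R s k)" "snd (path_point n R s k) \<le> snd (path_point n R s k')"
proof -
  note b = is_path_facts[OF d]
  have kk: "k \<le> length s" using k by simp
  note bk = path_point_mem[OF d kk] and bk' = path_point_mem[OF d k(2)]
  have "ups s k \<le> ups s k'" using ups_mono[OF k(1)] .
  then have "card R - 1 - ups s k' \<le> card R - 1 - ups s k" by simp
  then show "fst (path_point n R s k') \<le> fst (path_point n R s k)"
    using sorted_list_of_set_nth_le_iff[OF b(1) bk'(1) bk(1)] unfolding path_point_def grid_rows_def by simp
  have "rights s k \<le> rights s k'" using rights_mono[OF k(1)] .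
  then show "snd (path_point n R s k) \<le> snd (path_point n R s k')"
    using sorted_list_of_set_nth_le_iff[OF _ bk(2) bk'(2)] unfolding path_point_def grid_cols_def by simp
qed

lemma path_set_subset_grid:
  assumes d: "is_path n R s"
  shows "path_set n R s \<subseteq> R \<times> ({1..n} - R)"
proof
  fix x assume "x \<in> path_set n R s"
  then obtain k where k: "k \<le> length s" "x = path_point n R s k" unfolding path_set_eq_image by auto
  have "fst x \<in> R" "snd x \<in> {1..n} - R" using path_point_mem(3,4)[OF d k(1)] k(2) by simp_all
  then show "x \<in> R \<times> ({1..n} - R)" by (simp add: mem_Times_iff)
qed

lemma path_set_facet:
  assumes d: "is_path n R s"
  shows "face n (path_set n R s)" "card (path_set n R s) = n - 1"
proof -
  note b = is_path_facts[OF d]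
  have R: "R \<subseteq> {1..n}" using d by (simp add: is_path_def)
  let ?F = "path_set n R s"
  have sq: "?F \<subseteq> R \<times> ({1..n} - R)" using path_set_subset_grid[OF d] .
  show "face n ?F" unfolding face_def
  proof (intro conjI)
    show "?F \<subseteq> {1..n} \<times> {1..n}" using sq R by blast
    show "fst ` ?F \<inter> snd ` ?F = {}"
    proof -
      have "fst ` ?F \<subseteq> R" "snd ` ?F \<subseteq> {1..n} - R" using sq by auto
      then show ?thesis by blast
    qed
    show "\<forall>x\<in>?F. \<forall>y\<in>?F. \<not> (fst x < fst y \<and> snd x < snd y)"
    proof (intro ballI)
      fix x y assume "x \<in> ?F" "y \<in> ?F"
      then obtain k k' where kk: "k \<le> length s" "k' \<le> length s" "x = path_point n R s k" "y = path_point n R s k'"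
        unfolding path_set_eq_image by auto
      show "\<not> (fst x < fst y \<and> snd x < snd y)"
      proof (cases "k \<le> k'")
        case True then show ?thesis using path_point_mono[OF d True kk(2)] kk by simp
      next
        case False then show ?thesis using path_point_mono[OF d _ kk(1), of k'] kk by simp
      qed
    qed
  qed
  have "inj_on (path_point n R s) {..length s}" using path_point_inj[OF d] by (auto simp: inj_on_def)
  then have "card ?F = Suc (length s)" unfolding path_set_eq_image by (simp add: card_image)
  then show "card ?F = n - 1" using b by linarith
qed

lemma path_set_rows_cols:
  assumes d: "is_path n R s" and n: "n \<ge> 2"
  shows "fst ` path_set n R s = R" "snd ` path_set n R s = {1..n} - R"
proof -
  let ?F = "path_set n R s"
  have sq: "?F \<subseteq> R \<times> ({1..n} - R)" using path_set_subset_grid[OF d] .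
  have a: "fst ` ?F \<subseteq> R" "snd ` ?F \<subseteq> {1..n} - R" using sq by auto
  have ind: "fst ` ?F \<union> snd ` ?F = {1..n}" using face_indices_eq[OF path_set_facet[OF d] n] .
  have R: "R \<subseteq> {1..n}" using d by (simp add: is_path_def)
  show "fst ` ?F = R"
  proof (rule equalityI[OF a(1)], rule subsetI)
    fix x assume x: "x \<in> R"
    then have "x \<in> fst ` ?F \<union> snd ` ?F" using ind R by blast
    moreover have "x \<notin> snd ` ?F" using a(2) x by blast
    ultimately show "x \<in> fst ` ?F" by blast
  qed
  show "snd ` ?F = {1..n} - R"
  proof (rule equalityI[OF a(2)], rule subsetI)
    fix x assume x: "x \<in> {1..n} - R"
    then have "x \<in> fst ` ?F \<union> snd ` ?F" using ind by blast
    moreover have "x \<notin> fst ` ?F" using a(1) x by blast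
    ultimately show "x \<in> snd ` ?F" by blast
  qed
qed

lemma path_pt_inj_on:
  assumes "finite R"
  shows "inj_on (path_pt n R) ({..<card R} \<times> {..<card ({1..n} - R)})"
  unfolding inj_on_def path_pt_def grid_rows_def grid_cols_def
  using sorted_list_of_set_nth_eq_iff[OF assms] sorted_list_of_set_nth_eq_iff[of "{1..n} - R"]
  by (auto simp: prod_eq_iff)

lemma path_pt_less_iff:
  assumes "finite R" and x: "x \<in> {..<card R} \<times> {..<card ({1..n} - R)}"
    and y: "y \<in> {..<card R} \<times> {..<card ({1..n} - R)}"
  shows "fst (path_pt n R x) < fst (path_pt n R y) \<longleftrightarrow> fst x < fst y"
    "snd (path_pt n R x) < snd (path_pt n R y) \<longleftrightarrow> snd x < snd y"
proof -
  have "fst x < card R" "fst y < card R" "snd x < card ({1..n} - R)" "snd y < card ({1..n} - R)"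
    using x y by auto
  then show "fst (path_pt n R x) < fst (path_pt n R y) \<longleftrightarrow> fst x < fst y"
    "snd (path_pt n R x) < snd (path_pt n R y) \<longleftrightarrow> snd x < snd y"
    using sorted_list_of_set_nth_less_iff[OF assms(1)] sorted_list_of_set_nth_less_iff[of "{1..n} - R"]
    by (simp_all add: path_pt_def grid_rows_def grid_cols_def)
qed

lemma subset_grid_eq_path_pt_image:
  assumes "finite R" and F: "F \<subseteq> R \<times> ({1..n} - R)"
  shows "F = path_pt n R ` {x \<in> {..<card R} \<times> {..<card ({1..n} - R)}. path_pt n R x \<in> F}"
proof (intro equalityI subsetI)
  fix x assume x: "x \<in> F"
  then have "fst x \<in> R" "snd x \<in> {1..n} - R" using F by auto
  then obtain i j where "i < card R" "grid_rows R ! i = fst x"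
    "j < card ({1..n} - R)" "grid_cols n R ! j = snd x"
    using sorted_list_of_set_ex_nth[OF assms(1)] sorted_list_of_set_ex_nth[of "{1..n} - R"]
    unfolding grid_rows_def grid_cols_def by blast
  then show "x \<in> path_pt n R ` {x \<in> {..<card R} \<times> {..<card ({1..n} - R)}. path_pt n R x \<in> F}"
    using x by (intro image_eqI[of _ _ "(i, j)"]) (auto simp: path_pt_def)
qed auto

lemma facet_eq_path_set:
  assumes F: "F \<in> facets (Delta' n)" and n: "n \<ge> 2"
  shows "\<exists>s. is_path n (fst ` F) s \<and> path_set n (fst ` F) s = F"
proof -
  have f: "face n F" and c: "card F = n - 1" using facets_Delta'_iff[OF n] F by auto
  define R where "R = fst ` F"
  define box where "box = {..<card R} \<times> {..<card ({1..n} - R)}"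
  define I where "I = {x \<in> box. path_pt n R x \<in> F}"
  have ind: "fst ` F \<union> snd ` F = {1..n}" using face_indices_eq[OF f c n] .
  have cols: "snd ` F = {1..n} - R" using ind f by (auto simp: R_def face_def)
  have "F \<noteq> {}" using c n by auto
  then have R: "R \<noteq> {}" "R \<subseteq> {1..n}" "R \<noteq> {1..n}" using ind cols by (auto simp: R_def)
  then have finR: "finite R" using finite_subset by blast
  have grid: "F \<subseteq> R \<times> ({1..n} - R)"
  proof
    fix x assume "x \<in> F"
    then have "fst x \<in> R" "snd x \<in> snd ` F" by (auto simp: R_def)
    then show "x \<in> R \<times> ({1..n} - R)" using cols by (simp add: mem_Times_iff)
  qed
  have FI: "F = path_pt n R ` I"
    using subset_grid_eq_path_pt_image[OF finR grid] by (simp add: I_def box_def)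
  have "card (path_pt n R ` I) = card I"
    by (rule card_image[OF inj_on_subset[OF path_pt_inj_on[OF finR]]]) (auto simp: I_def box_def)
  then have "card I = n - 1" using FI c by simp
  also have "n - 1 = Suc ((card R - 1) + (card ({1..n} - R) - 1 - 0))"
  proof -
    have "card R + card ({1..n} - R) = n" "card R > 0" "card ({1..n} - R) > 0"
      using card_Diff_subset[OF finR R(2)] card_mono[OF _ R(2)] finR R by (auto simp: card_gt_0_iff)
    then show ?thesis by linarith
  qed
  finally have cI: "card I = \<dots>" .
  have "antichain I" unfolding antichain_def
  proof (intro ballI)
    fix x y assume "x \<in> I" "y \<in> I"
    then show "\<not> (fst x < fst y \<and> snd x < snd y)"
      using face_not_increasing[OF f] path_pt_less_iff[OF finR, where x=x and y=y] unfolding I_def box_def by blast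
  qed
  moreover have "I \<subseteq> {..card R - 1} \<times> {0..<card ({1..n} - R)}" by (auto simp: I_def box_def)
  moreover have "0 < card ({1..n} - R)" using R by (simp add: card_gt_0_iff)
  ultimately obtain s where s: "length s = (card R - 1) + (card ({1..n} - R) - 1)"
    "length (filter id s) = card R - 1" "set (walk (card R - 1, 0) s) = I"
    using antichain_eq_walk[OF refl _ _ _ cI] by auto
  have "is_path n R s" using R s(1,2) by (simp add: is_path_def is_path_steps_def)
  moreover have "path_set n R s = F" using FI s(3) by (simp add: path_set_def path_walk_def)
  ultimately show ?thesis by (auto simp: R_def)
qed

lemma path_set_inj:
  assumes d: "is_path n R s" and d': "is_path n R s'" and e: "path_set n R s = path_set n R s'"
  shows "s = s'"
proof -
  note b = is_path_facts[OF d] and b' = is_path_facts[OF d']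
  have sub: "set (walk (card R - 1, 0) t) \<subseteq> {..<card R} \<times> {..<card ({1..n} - R)}"
    if "is_path n R t" for t
    using path_point_mem[OF that] by (auto simp: set_walk)
  have "path_pt n R ` set (walk (card R - 1, 0) s) = path_pt n R ` set (walk (card R - 1, 0) s')"
    using e by (simp add: path_set_def path_walk_def)
  then have "set (walk (card R - 1, 0) s) = set (walk (card R - 1, 0) s')"
    using inj_on_image_eq_iff[OF path_pt_inj_on[OF b(1)] sub[OF d] sub[OF d']] by simp
  then show ?thesis using walk_eq_if_set_eq[of s s' "card R - 1" 0] b b' by simp
qed

lemma facets_Delta'_iff_path:
  assumes n: "n \<ge> 2"
  shows "F \<in> facets (Delta' n) \<longleftrightarrow> (\<exists>R s. is_path n R s \<and> F = path_set n R s)"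
proof
  assume "F \<in> facets (Delta' n)"
  then show "\<exists>R s. is_path n R s \<and> F = path_set n R s" using facet_eq_path_set[OF _ n] by metis
next
  assume "\<exists>R s. is_path n R s \<and> F = path_set n R s"
  then obtain R s where "is_path n R s" "F = path_set n R s" by blast
  then show "F \<in> facets (Delta' n)" using path_set_facet facets_Delta'_iff[OF n] by simp
qed

lemma block_path_set:
  assumes d: "is_path n R s" and n: "n \<ge> 2"
  shows "block n (path_set n R s) = R"
proof -
  let ?F = "path_set n R s"
  have F: "?F \<in> facets (Delta' n)" using facets_Delta'_iff_path[OF n] d by blast
  then have FD': "?F \<in> Delta' n" and mx: "\<forall>G\<in>Delta' n. ?F \<subseteq> G \<longrightarrow> G = ?F"
    unfolding mem_facets_iff by auto
  note rc = path_set_rows_cols[OF d n]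
  have sq: "?F \<subseteq> R \<times> ({1..n} - R)" using path_set_subset_grid[OF d] .
  have R: "R \<noteq> {}" "R \<subseteq> {1..n}" "R \<noteq> {1..n}" using d by (auto simp: is_path_def)
  have P: "R' \<noteq> {} \<and> R' \<subset> {1..n} \<and> ?F \<in> facets (DeltaR n R') \<longleftrightarrow> R' = R" for R'
  proof
    assume a: "R' \<noteq> {} \<and> R' \<subset> {1..n} \<and> ?F \<in> facets (DeltaR n R')"
    then have "?F \<in> DeltaR n R'" unfolding mem_facets_iff by blast
    then have sub: "?F \<subseteq> R' \<times> ({1..n} - R')" unfolding DeltaR_def by blast
    have "fst ` ?F \<subseteq> R'" using sub by auto
    then have RR: "R \<subseteq> R'" using rc(1) by simp
    have "snd ` ?F \<subseteq> {1..n} - R'" using sub by auto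
    then have RC: "{1..n} - R \<subseteq> {1..n} - R'" using rc(2) by simp
    have "R' \<subseteq> R"
    proof
      fix x assume x: "x \<in> R'"
      then have "x \<in> {1..n}" using a by blast
      then show "x \<in> R" using RC x by blast
    qed
    then show "R' = R" using RR by blast
  next
    assume a: "R' = R"
    have FD: "?F \<in> DeltaR n R" unfolding DeltaR_def using FD' sq by blast
    have "\<forall>G\<in>DeltaR n R. ?F \<subseteq> G \<longrightarrow> G = ?F"
    proof (intro ballI impI)
      fix G assume "G \<in> DeltaR n R" "?F \<subseteq> G"
      then have "G \<in> Delta' n" "?F \<subseteq> G" unfolding DeltaR_def by auto
      then show "G = ?F" using mx by blast
    qed
    then have "?F \<in> facets (DeltaR n R)" using FD unfolding mem_facets_iff by blast
    moreover have "R \<subset> {1..n}" using R by blast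
    ultimately show "R' \<noteq> {} \<and> R' \<subset> {1..n} \<and> ?F \<in> facets (DeltaR n R')" using a R(1) by blast
  qed
  show ?thesis unfolding block_def using P by simp
qed

lemma path_of_path_set:
  assumes d: "is_path n R s" and n: "n \<ge> 2"
  shows "path_of n (path_set n R s) = s"
proof -
  have P: "is_path_steps (card R) (card ({1..n} - R)) s' \<and> path_set n R s' = path_set n R s \<longleftrightarrow> s' = s" for s'
  proof
    assume a: "is_path_steps (card R) (card ({1..n} - R)) s' \<and> path_set n R s' = path_set n R s"
    then have "is_path n R s'" using d by (simp add: is_path_def)
    then show "s' = s" using path_set_inj[OF _ d] a by blast
  qed (use d in \<open>simp add: is_path_def\<close>)
  show ?thesis unfolding path_of_def Let_def block_path_set[OF d n] using P by simp
qed

section \<open>The order on row sets\<close>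

definition lex_less :: "nat list \<Rightarrow> nat list \<Rightarrow> bool" where
  "lex_less a b \<longleftrightarrow> (\<exists>j. j < length a \<and> j < length b \<and> take j a = take j b \<and> a ! j < b ! j)
     \<or> (length a < length b \<and> a = take (length a) b)"

lemma subset_less_iff_lex_less: "subset_less S R \<longleftrightarrow> lex_less (sorted_list_of_set S) (sorted_list_of_set R)"
  unfolding subset_less_def lex_less_def Let_def by (rule refl)

lemma lex_less_Nil_left: "lex_less [] b \<longleftrightarrow> b \<noteq> []"
  unfolding lex_less_def by auto

lemma lex_less_Nil_right: "\<not> lex_less a []"
  unfolding lex_less_def by auto

lemma lex_less_Cons: "lex_less (x # a) (y # b) \<longleftrightarrow> x < y \<or> (x = y \<and> lex_less a b)"
proof
  assume "lex_less (x # a) (y # b)"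
  then consider (j) j where "j < length (x # a)" "j < length (y # b)"
      "take j (x # a) = take j (y # b)" "(x # a) ! j < (y # b) ! j"
    | (p) "length (x # a) < length (y # b)" "x # a = take (length (x # a)) (y # b)"
    unfolding lex_less_def by blast
  then show "x < y \<or> (x = y \<and> lex_less a b)"
  proof cases
    case j
    show ?thesis
    proof (cases j)
      case 0 then show ?thesis using j by simp
    next
      case (Suc j')
      then have "x = y" "take j' a = take j' b" "a ! j' < b ! j'" "j' < length a" "j' < length b"
        using j by auto
      then show ?thesis unfolding lex_less_def by blast
    qed
  next
    case p
    then have "x = y" "a = take (length a) b" "length a < length b" by auto
    then show ?thesis unfolding lex_less_def by blast
  qed
next
  assume "x < y \<or> (x = y \<and> lex_less a b)"
  then consider "x < y" | "x = y" "lex_less a b" by blast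
  then show "lex_less (x # a) (y # b)"
  proof cases
    case 1
    then show ?thesis unfolding lex_less_def by (intro disjI1 exI[of _ 0]) simp
  next
    case 2
    from 2(2) consider (j) j where "j < length a" "j < length b" "take j a = take j b" "a ! j < b ! j"
      | (p) "length a < length b" "a = take (length a) b"
      unfolding lex_less_def by blast
    then show ?thesis
    proof cases
      case j
      then show ?thesis unfolding lex_less_def using 2(1) by (intro disjI1 exI[of _ "Suc j"]) simp
    next
      case p
      then show ?thesis unfolding lex_less_def using 2(1) by (intro disjI2) simp
    qed
  qed
qed

lemma lex_less_append: "lex_less (P @ a) (P @ b) \<longleftrightarrow> lex_less a b"
  by (induction P) (auto simp: lex_less_Cons)

lemma sorted_list_of_set_split:
  assumes f: "finite S"
  shows "sorted_list_of_set S = sorted_list_of_set {x\<in>S. x < z} @ sorted_list_of_set {x\<in>S. z \<le> x}"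
proof (rule sorted_distinct_set_unique)
  have f1: "finite {x\<in>S. x < z}" "finite {x\<in>S. z \<le> x}" using f by auto
  show "sorted (sorted_list_of_set S)" "distinct (sorted_list_of_set S)" by simp_all
  show "sorted (sorted_list_of_set {x\<in>S. x < z} @ sorted_list_of_set {x\<in>S. z \<le> x})"
    unfolding sorted_append using f1 by auto
  show "distinct (sorted_list_of_set {x\<in>S. x < z} @ sorted_list_of_set {x\<in>S. z \<le> x})"
    using f1 by auto
  show "set (sorted_list_of_set S) = set (sorted_list_of_set {x\<in>S. x < z} @ sorted_list_of_set {x\<in>S. z \<le> x})"
    using f f1 by auto
qed

lemma subset_less_iff_above:
  assumes fS: "finite S" and fR: "finite R" and low: "{x\<in>S. x < z} = {x\<in>R. x < z}"
  shows "subset_less S R \<longleftrightarrow>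
    lex_less (sorted_list_of_set {x\<in>S. z \<le> x}) (sorted_list_of_set {x\<in>R. z \<le> x})"
  unfolding subset_less_iff_lex_less sorted_list_of_set_split[OF fS, of z]
    sorted_list_of_set_split[OF fR, of z] low lex_less_append ..

lemma subset_less_cases:
  assumes fS: "finite S" and fR: "finite R"
  defines "z \<equiv> Min ((S - R) \<union> (R - S))"
  shows "z \<in> S \<Longrightarrow> z \<notin> R \<Longrightarrow> subset_less S R \<longleftrightarrow> (\<exists>r\<in>R. z < r)"
    and "z \<in> R \<Longrightarrow> z \<notin> S \<Longrightarrow> subset_less S R \<longleftrightarrow> \<not> (\<exists>x\<in>S. z < x)"
proof -
  have fD: "finite ((S - R) \<union> (R - S))" using fS fR by simp
  have "x \<in> S \<longleftrightarrow> x \<in> R" if "x < z" for x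
    using Min_le[OF fD, of x] that unfolding z_def by auto
  then have sl: "subset_less S R \<longleftrightarrow>
      lex_less (sorted_list_of_set {x\<in>S. z \<le> x}) (sorted_list_of_set {x\<in>R. z \<le> x})"
    by (intro subset_less_iff_above[OF fS fR]) auto
  have hd: "sorted_list_of_set {x\<in>T. z \<le> x} = z # sorted_list_of_set {x\<in>T. z < x}"
    if "finite T" "z \<in> T" for T :: "nat set"
  proof -
    have "Min {x\<in>T. z \<le> x} = z" using that by (intro Min_eqI) auto
    moreover have "{x\<in>T. z \<le> x} - {z} = {x\<in>T. z < x}" by auto
    ultimately show ?thesis using sorted_list_of_set_nonempty[of "{x\<in>T. z \<le> x}"] that by auto
  qed
  have lt_nonempty: "lex_less (z # xs) (sorted_list_of_set {x\<in>T. z \<le> x}) \<longleftrightarrow> (\<exists>x\<in>T. z < x)"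
    if "finite T" "z \<notin> T" for T xs
  proof (cases "{x\<in>T. z \<le> x} = {}")
    case True
    then have "\<not> (\<exists>x\<in>T. z < x)" by auto
    then show ?thesis unfolding True using lex_less_Nil_right by simp
  next
    case False
    have "z < Min {x\<in>T. z \<le> x}" using that False by (auto simp: order_le_less)
    then show ?thesis
      using sorted_list_of_set_nonempty[OF _ False] that False
      by (auto simp: lex_less_Cons order_le_less)
  qed
  show "subset_less S R \<longleftrightarrow> (\<exists>r\<in>R. z < r)" if "z \<in> S" "z \<notin> R"
    using sl hd[OF fS that(1)] lt_nonempty[OF fR that(2)] by simp
  show "subset_less S R \<longleftrightarrow> \<not> (\<exists>x\<in>S. z < x)" if "z \<in> R" "z \<notin> S"
  proof (cases "{x\<in>S. z \<le> x} = {}")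
    case True
    then have "\<not> (\<exists>x\<in>S. z < x)" by auto
    moreover have "subset_less S R"
      unfolding sl True hd[OF fR that(1)] by (simp add: lex_less_Nil_left)
    ultimately show ?thesis by simp
  next
    case False
    have "z < Min {x\<in>S. z \<le> x}" using that False fS by (auto simp: order_le_less)
    then show ?thesis
      using sl hd[OF fR that(1)] sorted_list_of_set_nonempty[OF _ False] that False fS
      by (auto simp: lex_less_Cons order_le_less)
  qed
qed

lemma subset_less_irrefl: "\<not> subset_less S S"
  unfolding subset_less_iff_lex_less using lex_less_append[of "sorted_list_of_set S" "[]" "[]"] by (simp add: lex_less_Nil_right)

lemma subset_less_insert_below_Max:
  assumes f: "finite R" and c: "c \<notin> R" "c < Max R" and ne: "R \<noteq> {}"
  shows "subset_less (insert c R) R"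
proof -
  have "(insert c R - R) \<union> (R - insert c R) = {c}" using c by auto
  then have z: "Min ((insert c R - R) \<union> (R - insert c R)) = c" by simp
  have "insert c R \<noteq> R" using c by auto
  note sc = subset_less_cases(1)[of "insert c R" R, OF _ f]
  have ex: "\<exists>r\<in>R. c < r" using Max_in[OF f ne] c by blast
  show ?thesis using sc[unfolded z] ex c f by simp
qed

lemma subset_less_remove_Max:
  assumes f: "finite R" and c: "card R \<ge> 2"
  shows "subset_less (R - {Max R}) R"
proof -
  have ne: "R \<noteq> {}" using c by auto
  have m: "Max R \<in> R" using Max_in[OF f ne] .
  have "(R - {Max R} - R) \<union> (R - (R - {Max R})) = {Max R}" using m by auto
  then have z: "Min ((R - {Max R} - R) \<union> (R - (R - {Max R}))) = Max R" by simp
  have "R - {Max R} \<noteq> R" using m by auto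
  from subset_less_cases(2)[of "R - {Max R}" R, OF _ f] z m f show ?thesis
    using Max_ge[OF f] by (auto simp: not_less)
qed

lemma subset_less_insert_above_Max:
  assumes f: "finite R" and c: "c \<notin> R" "\<forall>r\<in>R. r < c"
  shows "subset_less R (insert c R)"
proof -
  have "(R - insert c R) \<union> (insert c R - R) = {c}" using c by auto
  then have z: "Min ((R - insert c R) \<union> (insert c R - R)) = c" by simp
  have "R \<noteq> insert c R" using c by auto
  from subset_less_cases(2)[of R "insert c R", OF f _] z c f show ?thesis by auto
qed

lemma subset_less_remove_below_Max:
  assumes f: "finite R" and u: "u \<in> R" "u \<noteq> Max R"
  shows "subset_less R (R - {u})"
proof -
  have ne: "R \<noteq> {}" using u by auto
  have "(R - (R - {u})) \<union> ((R - {u}) - R) = {u}" using u by auto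
  then have z: "Min ((R - (R - {u})) \<union> ((R - {u}) - R)) = u" by simp
  have "R \<noteq> R - {u}" using u by auto
  moreover have "u < Max R" using Max_ge[OF f u(1)] u(2) by simp
  ultimately show ?thesis using subset_less_cases(1)[of R "R - {u}", OF f _] z u f Max_in[OF f ne]
    by auto
qed

lemma subset_less_cases_below:
  assumes fS: "finite S" and fR: "finite R" and l: "subset_less S R"
  shows "(\<exists>u\<in>S. u \<notin> R \<and> u < Max R) \<or> (S \<subseteq> R \<and> Max R \<notin> S)"
proof -
  have ne: "S \<noteq> R" using l subset_less_irrefl by blast
  define D where "D = (S - R) \<union> (R - S)"
  define z where "z = Min D"
  have fD: "finite D" using fS fR by (simp add: D_def)
  have neD: "D \<noteq> {}" using ne by (auto simp: D_def)
  have zD: "z \<in> D" unfolding z_def using fD neD by simp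
  have zmin: "\<And>x. x \<in> D \<Longrightarrow> z \<le> x" unfolding z_def using fD by simp
  note c = subset_less_cases[OF fS fR, folded D_def, folded z_def]
  show ?thesis
  proof (cases "z \<in> S")
    case True
    then have zr: "z \<notin> R" using zD by (auto simp: D_def)
    then obtain r where "r \<in> R" "z < r" using c(1)[OF True zr] l by blast
    then have "z < Max R" using Max_ge[OF fR] by (meson less_le_trans)
    then show ?thesis using True zr by blast
  next
    case False
    then have zr: "z \<in> R" using zD by (auto simp: D_def)
    have no: "\<not> (\<exists>x\<in>S. z < x)" using c(2)[OF zr False] l by blast
    have SR: "S \<subseteq> R"
    proof
      fix x assume x: "x \<in> S"
      then have "x < z" using no False by (metis linorder_neqE_nat)
      then have "x \<notin> D" using zmin by force
      then show "x \<in> R" using x by (auto simp: D_def)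
    qed
    have "Max R \<notin> S" using no Max_ge[OF fR zr] False by force
    then show ?thesis using SR by blast
  qed
qed

lemma subset_less_cases_above:
  assumes fS: "finite S" and fR: "finite R" and neR: "R \<noteq> {}" and l: "subset_less R S"
  shows "(\<exists>u\<in>R. u \<notin> S \<and> u \<noteq> Max R) \<or> (\<exists>w\<in>S. w \<notin> R \<and> Max R < w)"
proof -
  have ne: "R \<noteq> S" using l subset_less_irrefl by blast
  define D where "D = (R - S) \<union> (S - R)"
  define z where "z = Min D"
  have fD: "finite D" using fS fR by (simp add: D_def)
  have neD: "D \<noteq> {}" using ne by (auto simp: D_def)
  have zD: "z \<in> D" unfolding z_def using fD neD by simp
  note c = subset_less_cases[OF fR fS, folded D_def, folded z_def]
  show ?thesis
  proof (cases "z \<in> R")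
    case True
    then have zs: "z \<notin> S" using zD by (auto simp: D_def)
    then obtain x where x: "x \<in> S" "z < x" using c(1)[OF True zs] l by blast
    show ?thesis
    proof (cases "z = Max R")
      case True
      then have "x \<notin> R" using x Max_ge[OF fR] by force
      then show ?thesis using x True by blast
    next
      case False
      then show ?thesis using \<open>z \<in> R\<close> zs by blast
    qed
  next
    case False
    then have zs: "z \<in> S" using zD by (auto simp: D_def)
    have no: "\<not> (\<exists>r\<in>R. z < r)" using c(2)[OF zs False] l by blast
    have "Max R \<in> R" using Max_in[OF fR neR] .
    then have "Max R < z" using no False by (metis linorder_neqE_nat)
    then show ?thesis using zs False by blast
  qed
qed


section \<open>Types of points\<close>

lemma only_in_col_iff:
  assumes k: "k \<le> length s"
  shows "only_in_col (path_walk R s) k \<longleftrightarrow> ((k = 0 \<or> \<not> s ! (k - 1)) \<and> (k = length s \<or> \<not> s ! k))"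
proof -
  have "only_in_col (path_walk R s) k \<longleftrightarrow> (\<forall>k'\<le>length s. rights s k' = rights s k \<longrightarrow> k' = k)"
    unfolding only_in_col_def using path_walk_nth k
    by (auto simp: path_walk_def less_Suc_eq_le)
  then show ?thesis using rights_unique_iff[OF k] by simp
qed

lemma only_in_row_iff:
  assumes d: "is_path n R s" and k: "k \<le> length s"
  shows "only_in_row (path_walk R s) k \<longleftrightarrow> ((k = 0 \<or> s ! (k - 1)) \<and> (k = length s \<or> s ! k))"
proof -
  note b = is_path_facts[OF d]
  have e: "fst (path_walk R s ! k') = fst (path_walk R s ! k) \<longleftrightarrow> ups s k' = ups s k" if "k' \<le> length s" for k'
  proof -
    have "ups s k' \<le> card R - 1" "ups s k \<le> card R - 1" using ups_le[OF that] ups_le[OF k] b(6) by auto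
    then show ?thesis using path_walk_nth[OF that] path_walk_nth[OF k] by auto
  qed
  have "only_in_row (path_walk R s) k \<longleftrightarrow> (\<forall>k'\<le>length s. ups s k' = ups s k \<longrightarrow> k' = k)"
    unfolding only_in_row_def using e by (auto simp: path_walk_def less_Suc_eq_le)
  then show ?thesis using ups_unique_iff[OF k] by simp
qed

definition minus_point :: "nat \<Rightarrow> nat set \<Rightarrow> bool list \<Rightarrow> nat \<Rightarrow> bool" where
  "minus_point n R s k \<longleftrightarrow> left_turn s k
     \<or> (bullet_pt s (path_walk R s) k \<and> snd (path_point n R s k) < Max R)
     \<or> (circle_pt s (path_walk R s) k \<and> fst (path_point n R s k) = Max R)"

lemma minus_part_path_set:
  assumes d: "is_path n R s" and n: "n \<ge> 2"
  shows "minus_part n (path_set n R s) = {path_point n R s k | k. k \<le> length s \<and> minus_point n R s k}"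
proof -
  have e1: "path_pt n R (path_walk R s ! k) = path_point n R s k" if "k \<le> length s" for k
    using path_pt_path_walk_nth[OF that] .
  have e2: "grid_cols n R ! snd (path_walk R s ! k) = snd (path_point n R s k)" if "k \<le> length s" for k
    using path_walk_nth[OF that] unfolding path_point_def by simp
  have e3: "grid_rows R ! fst (path_walk R s ! k) = fst (path_point n R s k)" if "k \<le> length s" for k
    using path_walk_nth[OF that] unfolding path_point_def by simp
  have len: "length (path_walk R s) = Suc (length s)" by (simp add: path_walk_def)
  define c where "c k = (left_turn s k
         \<or> (bullet_pt s (path_walk R s) k \<and> grid_cols n R ! snd (path_walk R s ! k) < Max R)
         \<or> (circle_pt s (path_walk R s) k \<and> grid_rows R ! fst (path_walk R s ! k) = Max R))" for k
  have ce: "c k = minus_point n R s k" if "k \<le> length s" for k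
    unfolding c_def minus_point_def using e2[OF that] e3[OF that] by simp
  have mp: "minus_part n (path_set n R s) = {path_pt n R (path_walk R s ! k) | k. k < length (path_walk R s) \<and> c k}"
    unfolding minus_part_def Let_def block_path_set[OF d n] path_of_path_set[OF d n] c_def by (rule refl)
  show ?thesis
  proof (intro set_eqI iffI)
    fix x assume "x \<in> minus_part n (path_set n R s)"
    then obtain k where k: "k < length (path_walk R s)" "x = path_pt n R (path_walk R s ! k)" "c k"
      unfolding mp by blast
    have kl: "k \<le> length s" using k(1) len by simp
    have "x = path_point n R s k \<and> k \<le> length s \<and> minus_point n R s k" using k kl e1 ce by simp
    then show "x \<in> {path_point n R s k | k. k \<le> length s \<and> minus_point n R s k}" by blast
  next
    fix x assume "x \<in> {path_point n R s k | k. k \<le> length s \<and> minus_point n R s k}"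
    then obtain k where k: "k \<le> length s" "x = path_point n R s k" "minus_point n R s k" by blast
    have "k < length (path_walk R s) \<and> x = path_pt n R (path_walk R s ! k) \<and> c k"
      using k e1 ce len by simp
    then show "x \<in> minus_part n (path_set n R s)" unfolding mp by blast
  qed
qed

lemma fst_path_point_eq_Max_iff:
  assumes d: "is_path n R s" and k: "k \<le> length s"
  shows "fst (path_point n R s k) = Max R \<longleftrightarrow> ups s k = 0"
proof -
  note b = is_path_facts[OF d]
  have ne: "R \<noteq> {}" using d by (simp add: is_path_def)
  have m: "Max R = grid_rows R ! (card R - 1)" using sorted_list_of_set_nth_last[OF b(1) ne] by (simp add: grid_rows_def)
  have u: "ups s k \<le> card R - 1" using ups_le[OF k] b(6) by simp
  have "fst (path_point n R s k) = Max R \<longleftrightarrow> card R - 1 - ups s k = card R - 1"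
    unfolding m path_point_def grid_rows_def using sorted_list_of_set_nth_eq_iff[OF b(1), of "card R - 1 - ups s k" "card R - 1"] b(2)
    by simp
  then show ?thesis using u by linarith
qed

lemma only_in_col_unique:
  assumes d: "is_path n R s" and k: "k \<le> length s" and oc: "only_in_col (path_walk R s) k"
    and y: "y \<in> path_set n R s" and e: "snd y = snd (path_point n R s k)"
  shows "y = path_point n R s k"
proof -
  obtain k' where k': "k' \<le> length s" "y = path_point n R s k'" using y unfolding path_set_eq_image by auto
  have "rights s k' = rights s k"
    using e k' path_point_mem(2)[OF d k] path_point_mem(2)[OF d k'(1)] sorted_list_of_set_nth_eq_iff[of "{1..n} - R"]
    unfolding path_point_def grid_cols_def by simp
  then have "k' = k" using oc only_in_col_iff[OF k] rights_unique_iff[OF k] k' by blast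
  then show ?thesis using k' by simp
qed

lemma only_in_row_unique:
  assumes d: "is_path n R s" and k: "k \<le> length s" and orr: "only_in_row (path_walk R s) k"
    and y: "y \<in> path_set n R s" and e: "fst y = fst (path_point n R s k)"
  shows "y = path_point n R s k"
proof -
  note b = is_path_facts[OF d]
  obtain k' where k': "k' \<le> length s" "y = path_point n R s k'" using y unfolding path_set_eq_image by auto
  have "card R - 1 - ups s k' = card R - 1 - ups s k"
    using e k' path_point_mem(1)[OF d k] path_point_mem(1)[OF d k'(1)] sorted_list_of_set_nth_eq_iff[OF b(1)]
    unfolding path_point_def grid_rows_def by simp
  moreover have "ups s k' \<le> card R - 1" "ups s k \<le> card R - 1" using ups_le[OF k] ups_le[OF k'(1)] b(6) by auto
  ultimately have "ups s k' = ups s k" by linarith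
  then have "k' = k" using orr only_in_row_iff[OF d k] ups_unique_iff[OF k] k' by blast
  then show ?thesis using k' by simp
qed

lemma block_facet:
  assumes G: "G \<in> facets (Delta' n)" and n: "n \<ge> 2"
  shows "block n G = fst ` G"
proof -
  obtain S t where "is_path n S t" "G = path_set n S t" using facets_Delta'_iff_path[OF n] G by blast
  then show ?thesis using block_path_set path_set_rows_cols n by simp
qed

lemma path_point_in_minus_part:
  assumes d: "is_path n R s" and n: "n \<ge> 2" and k: "k \<le> length s" and m: "minus_point n R s k"
  shows "path_point n R s k \<in> minus_part n (path_set n R s)"
  using minus_part_path_set[OF d n] k m by blast

lemma path_point_in_plus_part:
  assumes d: "is_path n R s" and n: "n \<ge> 2" and k: "k \<le> length s" and m: "\<not> minus_point n R s k"
  shows "path_point n R s k \<in> plus_part n (path_set n R s)"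
proof -
  have "path_point n R s k \<in> path_set n R s" unfolding path_set_eq_image using k by blast
  moreover have "path_point n R s k \<notin> minus_part n (path_set n R s)"
  proof
    assume "path_point n R s k \<in> minus_part n (path_set n R s)"
    then obtain k' where k': "k' \<le> length s" "path_point n R s k = path_point n R s k'" "minus_point n R s k'"
      unfolding minus_part_path_set[OF d n] by blast
    then have "k = k'" using path_point_inj[OF d k] by simp
    then show False using m k' by simp
  qed
  ultimately show ?thesis unfolding plus_part_def by blast
qed

lemma rights_total: "is_path n R s \<Longrightarrow> rights s (length s) = card ({1..n} - R) - 1"
  using ups_add_rights[of "length s" s] ups_length[of s] is_path_facts[of n R s] by simp

lemma ups_total: "is_path n R s \<Longrightarrow> ups s (length s) = card R - 1"
  using ups_length[of s] is_path_facts[of n R s] by simp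

lemma not_in_path_set_if_col_in_rows:
  assumes dS: "is_path n S t" and n: "n \<ge> 2" and x: "snd x \<in> S"
  shows "x \<notin> path_set n S t"
  using path_set_rows_cols(2)[OF dS n] x by force

lemma not_in_path_set_if_row_notin_rows:
  assumes dS: "is_path n S t" and n: "n \<ge> 2" and x: "fst x \<notin> S"
  shows "x \<notin> path_set n S t"
  using path_set_rows_cols(1)[OF dS n] x by force

lemma point_types:
  assumes d: "is_path n R s" and k: "k \<le> length s" and L: "length s \<noteq> 0"
  shows "left_turn s k \<or> right_turn s k \<or> bullet_pt s (path_walk R s) k \<or> circle_pt s (path_walk R s) k"
proof -
  have "(k = 0 \<or> \<not> s ! (k - 1)) \<and> (k = length s \<or> \<not> s ! k)
      \<or> (k = 0 \<or> s ! (k - 1)) \<and> (k = length s \<or> s ! k)" if "\<not> right_turn s k" "\<not> left_turn s k"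
    using that k L unfolding left_turn_def right_turn_def by (cases "k = 0"; cases "k = length s") auto
  then show ?thesis using only_in_col_iff[OF k] only_in_row_iff[OF d k]
    unfolding bullet_pt_def circle_pt_def by blast
qed

section \<open>Earlier facets miss a point of \<open>F\<^sup>-\<close>, later ones a point of \<open>F\<^sup>+\<close>\<close>

lemma minus_point_if_turn_up:
  assumes d: "is_path n R s" and k: "k < length s" "s ! k" "k = 0 \<or> \<not> s ! (k - 1)"
  shows "minus_point n R s k"
proof (cases "k = 0")
  case True
  have "circle_pt s (path_walk R s) k"
    using only_in_row_iff[OF d] only_in_col_iff[of k s R] True k
    by (simp add: circle_pt_def left_turn_def right_turn_def)
  moreover have "fst (path_point n R s k) = Max R" using fst_path_point_eq_Max_iff[OF d] True by simp
  ultimately show ?thesis by (simp add: minus_point_def)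
next
  case False
  then show ?thesis using k by (simp add: minus_point_def left_turn_def)
qed

lemma minus_point_if_first_in_col:
  assumes d: "is_path n R s" and k: "k \<le> length s" "k = 0 \<or> \<not> s ! (k - 1)"
    and col: "snd (path_point n R s k) < Max R"
  shows "minus_point n R s k"
proof (cases "k < length s \<and> s ! k")
  case True
  then show ?thesis using minus_point_if_turn_up[OF d] k by blast
next
  case False
  then have "bullet_pt s (path_walk R s) k"
    using only_in_col_iff[OF k(1)] k by (auto simp: bullet_pt_def left_turn_def right_turn_def)
  then show ?thesis using col by (simp add: minus_point_def)
qed

lemma not_minus_point_if_entered_up:
  assumes k: "k \<le> length s" "0 < k" "s ! (k - 1)"
    and row: "fst (path_point n R s k) \<noteq> Max R"
  shows "\<not> minus_point n R s k"
  using only_in_col_iff[OF k(1)] k row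
  by (simp add: minus_point_def left_turn_def bullet_pt_def circle_pt_def)

lemma not_minus_point_if_last_in_col:
  assumes d: "is_path n R s" and k: "k \<le> length s" "k = length s \<or> \<not> s ! k"
    and col: "Max R < snd (path_point n R s k)"
  shows "\<not> minus_point n R s k"
proof
  assume "minus_point n R s k"
  then have c: "circle_pt s (path_walk R s) k" "fst (path_point n R s k) = Max R"
    using k col by (auto simp: minus_point_def left_turn_def bullet_pt_def)
  then have "k = length s" using only_in_row_iff[OF d k(1)] k by (auto simp: circle_pt_def)
  then have "0 < k" "s ! (k - 1)" using c(1) only_in_col_iff[OF k(1)] by (auto simp: circle_pt_def)
  then have "0 < ups s k" using ups_less[of "k - 1" k s] k(1) by simp
  then show False using c(2) fst_path_point_eq_Max_iff[OF d k(1)] by simp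
qed

lemma not_minus_point_if_right_turn: "right_turn s k \<Longrightarrow> \<not> minus_point n R s k"
  by (auto simp: minus_point_def left_turn_def right_turn_def bullet_pt_def circle_pt_def)

lemma snd_path_point_eq: "rights s k = rights s' k' \<Longrightarrow> snd (path_point n R s k) = snd (path_point n R s' k')"
  by (simp add: path_point_def)

lemma fst_path_point_eq: "ups s k = ups s' k' \<Longrightarrow> fst (path_point n R s k) = fst (path_point n R s' k')"
  by (simp add: path_point_def)

lemma minus_part_miss_new_row:
  assumes dR: "is_path n R s" and dS: "is_path n S t" and n: "n \<ge> 2"
    and u: "u \<in> S" "u \<notin> R" "u < Max R"
  shows "\<exists>x\<in>minus_part n (path_set n R s). x \<notin> path_set n S t"
proof -
  have "u \<in> snd ` path_set n R s" using path_set_rows_cols(2)[OF dR n] u dS by (auto simp: is_path_def)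
  then obtain ky where ky: "ky \<le> length s" "snd (path_point n R s ky) = u"
    unfolding path_set_eq_image by auto
  obtain k where k: "k \<le> ky" "rights s k = rights s ky" "k = 0 \<or> \<not> s ! (k - 1)"
    using first_in_column[OF ky(1)] by blast
  have col: "snd (path_point n R s k) = u" using snd_path_point_eq[OF k(2)] ky(2) by simp
  have "minus_point n R s k" using minus_point_if_first_in_col[OF dR _ k(3)] k(1) ky(1) col u(3) by simp
  moreover have "path_point n R s k \<notin> path_set n S t"
    using not_in_path_set_if_col_in_rows[OF dS n] col u(1) by simp
  moreover have "k \<le> length s" using k(1) ky(1) by simp
  ultimately show ?thesis using path_point_in_minus_part[OF dR n] by blast
qed

lemma minus_part_miss_Max_row:
  assumes dR: "is_path n R s" and dS: "is_path n S t" and n: "n \<ge> 2"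
    and R: "card R \<ge> 2" and S: "Max R \<notin> S"
  shows "\<exists>x\<in>minus_part n (path_set n R s). x \<notin> path_set n S t"
proof -
  have "ups s 0 < ups s (length s)" using ups_total[OF dR] R by simp
  then obtain i where "i < length s" "s ! i" using ups_increase[of 0 "length s" s] by auto
  then obtain k where k: "k < length s" "s ! k" "\<forall>l<k. \<not> s ! l"
    using first_index_from[of 0 i s id] by auto
  have "ups s k = 0" using ups_const[of 0 k s] k by simp
  then have row: "fst (path_point n R s k) = Max R"
    using fst_path_point_eq_Max_iff[OF dR] k(1) by simp
  have "k = 0 \<or> \<not> s ! (k - 1)" using k(3) by (cases k) auto
  then have "minus_point n R s k" using minus_point_if_turn_up[OF dR k(1,2)] by simp
  moreover have "path_point n R s k \<notin> path_set n S t"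
    using not_in_path_set_if_row_notin_rows[OF dS n] row S by simp
  ultimately show ?thesis using path_point_in_minus_part[OF dR n, of k] k(1) by auto
qed

text \<open>Beyond the first difference at step \<open>k\<close>, the path \<open>t\<close> has climbed above row index
  \<open>ups s k\<close>, and before it \<open>t\<close> has not moved further right than \<open>s\<close>.\<close>

lemma path_point_notin_path_set_up:
  assumes ds: "is_path n R s" and dt: "is_path n R t" and k: "take k t = take k s" "k < length t"
    "t ! k" "\<not> s ! k" and k2: "k < k2" "k2 \<le> length s" "ups s k2 = ups s k"
  shows "path_point n R s k2 \<notin> path_set n R t"
proof
  assume "path_point n R s k2 \<in> path_set n R t"
  then obtain j where j: "j \<le> length t" "path_point n R s k2 = path_point n R t j"
    unfolding path_set_eq_image by auto
  note e = path_point_eqD[OF ds dt k2(2) j]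
  have same: "ups t k = ups s k" "rights t k = rights s k" using ups_rights_take[OF k(1)] by auto
  show False
  proof (cases "k < j")
    case True
    then have "ups t (Suc k) \<le> ups t j" by (intro ups_mono) simp
    then show False using e(1) k2(3) same ups_Suc[OF k(2)] k(3) by simp
  next
    case False
    then have "rights t j \<le> rights t k" by (intro rights_mono) simp
    then show False using e(2) same rights_less[OF k2(1,2) k(4)] by simp
  qed
qed

lemma path_point_notin_path_set_right:
  assumes ds: "is_path n R s" and dt: "is_path n R t" and k: "take k t = take k s" "k < length t"
    "\<not> t ! k" "s ! k" and k2: "k < k2" "k2 \<le> length s" "rights s k2 = rights s k"
  shows "path_point n R s k2 \<notin> path_set n R t"
proof
  assume "path_point n R s k2 \<in> path_set n R t"
  then obtain j where j: "j \<le> length t" "path_point n R s k2 = path_point n R t j"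
    unfolding path_set_eq_image by auto
  note e = path_point_eqD[OF ds dt k2(2) j]
  have same: "ups t k = ups s k" "rights t k = rights s k" using ups_rights_take[OF k(1)] by auto
  show False
  proof (cases "k < j")
    case True
    then have "rights t (Suc k) \<le> rights t j" by (intro rights_mono) simp
    then show False using e(2) k2(3) same rights_Suc[OF k(2)] k(3) by simp
  next
    case False
    then have "ups t j \<le> ups t k" by (intro ups_mono) simp
    then show False using e(1) same ups_less[OF k2(1,2) k(4)] by simp
  qed
qed

lemma minus_part_miss_same_grid:
  assumes ds: "is_path n R s" and dt: "is_path n R t" and n: "n \<ge> 2" and st: "steps_less t s"
  shows "\<exists>x\<in>minus_part n (path_set n R s). x \<notin> path_set n R t"
proof -
  obtain k where k: "k < length t" "k < length s" "take k t = take k s" "t ! k" "\<not> s ! k"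
    using st unfolding steps_less_def by blast
  have "ups s (Suc k) = ups t k" using ups_Suc[OF k(2)] k(5) ups_rights_take[OF k(3)] by simp
  also have "\<dots> < ups t (Suc k)" using ups_Suc[OF k(1)] k(4) by simp
  also have "\<dots> \<le> ups s (length s)" using ups_mono[of "Suc k" "length t" t] k(1)
    ups_total[OF ds] ups_total[OF dt] by simp
  finally obtain i where "Suc k \<le> i" "i < length s" "s ! i" using ups_increase[of "Suc k" "length s" s] k by auto
  then obtain k2 where k2: "Suc k \<le> k2" "k2 < length s" "s ! k2" "\<forall>l. Suc k \<le> l \<longrightarrow> l < k2 \<longrightarrow> \<not> s ! l"
    using first_index_from[of "Suc k" i s id] by auto
  have flat: "\<forall>l. k \<le> l \<and> l < k2 \<longrightarrow> \<not> s ! l" using k2(4) k(5) by (metis Suc_leI le_neq_implies_less)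
  have "minus_point n R s k2" using minus_point_if_turn_up[OF ds k2(2,3)] flat k2(1) by simp
  moreover have "path_point n R s k2 \<notin> path_set n R t"
    using path_point_notin_path_set_up[OF ds dt k(3,1,4,5)] k2(1,2) ups_const[of k k2 s] flat by simp
  ultimately show ?thesis using path_point_in_minus_part[OF ds n, of k2] k2(2) by auto
qed

lemma earlier_facet_misses_minus_part:
  assumes dR: "is_path n R s" and dS: "is_path n S t" and n: "n \<ge> 2"
    and less: "subset_less S R \<or> (S = R \<and> steps_less t s)"
  shows "\<exists>x\<in>minus_part n (path_set n R s). x \<notin> path_set n S t"
proof (cases "S = R \<and> steps_less t s")
  case True
  then show ?thesis using minus_part_miss_same_grid[OF dR _ n] dS by simp
next
  case False
  note bR = is_path_facts[OF dR] and bS = is_path_facts[OF dS]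
  have R: "R \<noteq> {}" and S: "S \<noteq> {}" using dR dS by (auto simp: is_path_def)
  from False less have "subset_less S R" by blast
  from subset_less_cases_below[OF bS(1) bR(1) this] show ?thesis
  proof
    assume "\<exists>u\<in>S. u \<notin> R \<and> u < Max R"
    then obtain u where "u \<in> S" "u \<notin> R" "u < Max R" by blast
    then show ?thesis by (rule minus_part_miss_new_row[OF dR dS n])
  next
    assume max: "S \<subseteq> R \<and> Max R \<notin> S"
    obtain y where "y \<in> S" using S by blast
    then have "{y, Max R} \<subseteq> R" "y \<noteq> Max R" using max Max_in[OF bR(1) R] by auto
    then have "card R \<ge> 2" using card_mono[OF bR(1), of "{y, Max R}"] by simp
    then show ?thesis using minus_part_miss_Max_row[OF dR dS n] max by blast
  qed
qed

lemma plus_part_miss_lost_row: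
  assumes dR: "is_path n R s" and dS: "is_path n S t" and n: "n \<ge> 2"
    and u: "u \<in> R" "u \<notin> S" "u \<noteq> Max R"
  shows "\<exists>x\<in>plus_part n (path_set n R s). x \<notin> path_set n S t"
proof -
  obtain ky where ky: "ky \<le> length s" "fst (path_point n R s ky) = u"
    using path_set_rows_cols(1)[OF dR n] u(1) unfolding path_set_eq_image by force
  obtain k where k: "k \<le> ky" "ups s k = ups s ky" "k = 0 \<or> s ! (k - 1)"
    using first_in_row[OF ky(1)] by blast
  have row: "fst (path_point n R s k) = u" using fst_path_point_eq[OF k(2)] ky(2) by simp
  have kL: "k \<le> length s" using k(1) ky(1) by simp
  have "k \<noteq> 0"
  proof
    assume "k = 0"
    then have "fst (path_point n R s k) = Max R" using fst_path_point_eq_Max_iff[OF dR kL] by simp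
    then show False using row u(3) by simp
  qed
  then have "\<not> minus_point n R s k" using not_minus_point_if_entered_up[OF kL] k(3) row u(3) by simp
  moreover have "path_point n R s k \<notin> path_set n S t"
    using not_in_path_set_if_row_notin_rows[OF dS n] row u(2) by simp
  ultimately show ?thesis using path_point_in_plus_part[OF dR n kL] by blast
qed

lemma plus_part_miss_new_col:
  assumes dR: "is_path n R s" and dS: "is_path n S t" and n: "n \<ge> 2"
    and w: "w \<in> S" "w \<notin> R" "Max R < w"
  shows "\<exists>x\<in>plus_part n (path_set n R s). x \<notin> path_set n S t"
proof -
  have "w \<in> snd ` path_set n R s" using path_set_rows_cols(2)[OF dR n] w dS by (auto simp: is_path_def)
  then obtain ky where ky: "ky \<le> length s" "snd (path_point n R s ky) = w"
    unfolding path_set_eq_image by auto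
  obtain k where k: "ky \<le> k" "k \<le> length s" "rights s k = rights s ky" "k = length s \<or> \<not> s ! k"
    using last_in_column[OF ky(1)] by blast
  have col: "snd (path_point n R s k) = w" using snd_path_point_eq[OF k(3)] ky(2) by simp
  have "\<not> minus_point n R s k" using not_minus_point_if_last_in_col[OF dR k(2,4)] col w(3) by simp
  moreover have "path_point n R s k \<notin> path_set n S t"
    using not_in_path_set_if_col_in_rows[OF dS n] col w(1) by simp
  ultimately show ?thesis using path_point_in_plus_part[OF dR n k(2)] by blast
qed

lemma plus_part_miss_same_grid:
  assumes ds: "is_path n R s" and dt: "is_path n R t" and n: "n \<ge> 2" and st: "steps_less s t"
  shows "\<exists>x\<in>plus_part n (path_set n R s). x \<notin> path_set n R t"
proof -
  obtain k where k: "k < length s" "k < length t" "take k s = take k t" "s ! k" "\<not> t ! k"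
    using st unfolding steps_less_def by blast
  have "rights s (Suc k) = rights t k" using rights_Suc[OF k(1)] k(4) ups_rights_take[OF k(3)] by simp
  also have "\<dots> < rights t (Suc k)" using rights_Suc[OF k(2)] k(5) by simp
  also have "\<dots> \<le> rights s (length s)" using rights_mono[of "Suc k" "length t" t] k(2)
    rights_total[OF ds] rights_total[OF dt] by simp
  finally obtain i where "Suc k \<le> i" "i < length s" "\<not> s ! i"
    using rights_increase[of "Suc k" "length s" s] k by auto
  then obtain k2 where k2: "Suc k \<le> k2" "k2 < length s" "\<not> s ! k2" "\<forall>l. Suc k \<le> l \<longrightarrow> l < k2 \<longrightarrow> s ! l"
    using first_index_from[of "Suc k" i s Not] by auto
  have steep: "\<forall>l. k \<le> l \<and> l < k2 \<longrightarrow> s ! l" using k2(4) k(4) by (metis Suc_leI le_neq_implies_less)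
  have "right_turn s k2" using k2 steep unfolding right_turn_def by simp
  then have "\<not> minus_point n R s k2" by (rule not_minus_point_if_right_turn)
  moreover have "path_point n R s k2 \<notin> path_set n R t"
    using path_point_notin_path_set_right[OF ds dt _ k(2,5,4)] k(3) k2(1,2) rights_const[of k k2 s] steep
    by simp
  ultimately show ?thesis using path_point_in_plus_part[OF ds n, of k2] k2(2) by auto
qed

lemma later_facet_misses_plus_part:
  assumes dR: "is_path n R s" and dS: "is_path n S t" and n: "n \<ge> 2"
    and less: "subset_less R S \<or> (R = S \<and> steps_less s t)"
  shows "\<exists>x\<in>plus_part n (path_set n R s). x \<notin> path_set n S t"
proof (cases "R = S \<and> steps_less s t")
  case True
  then show ?thesis using plus_part_miss_same_grid[OF dR _ n] dS by simp
next
  case False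
  note bR = is_path_facts[OF dR] and bS = is_path_facts[OF dS]
  have R: "R \<noteq> {}" using dR by (auto simp: is_path_def)
  from False less have "subset_less R S" by blast
  from subset_less_cases_above[OF bS(1) bR(1) R this] show ?thesis
  proof
    assume "\<exists>u\<in>R. u \<notin> S \<and> u \<noteq> Max R"
    then obtain u where "u \<in> R" "u \<notin> S" "u \<noteq> Max R" by blast
    then show ?thesis by (rule plus_part_miss_lost_row[OF dR dS n])
  next
    assume "\<exists>w\<in>S. w \<notin> R \<and> Max R < w"
    then obtain w where "w \<in> S" "w \<notin> R" "Max R < w" by blast
    then show ?thesis by (rule plus_part_miss_new_col[OF dR dS n])
  qed
qed

section \<open>Covering \<open>F - {x}\<close> by earlier and later facets\<close>

lemma facet_replace_point:
  assumes F: "F \<in> facets (Delta' n)" and n: "n \<ge> 2" and x: "x \<in> F"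
    and y: "y \<notin> F - {x}" "face n (insert y (F - {x}))"
  shows "insert y (F - {x}) \<in> facets (Delta' n)"
proof -
  have "face n F" "card F = n - 1" using F facets_Delta'_iff[OF n] by auto
  then have "card (insert y (F - {x})) = n - 1" using x y(1) n face_finite by simp
  then show ?thesis using facets_Delta'_iff[OF n] y(2) by simp
qed

lemma facet_with_new_row:
  assumes d: "is_path n R s" and n: "n \<ge> 2" and x: "x \<in> path_set n R s"
    and only: "\<forall>y\<in>path_set n R s. snd y = snd x \<longrightarrow> y = x" and ne: "path_set n R s \<noteq> {x}"
  shows "\<exists>G\<in>facets (Delta' n). path_set n R s - {x} \<subseteq> G \<and> fst ` G = insert (snd x) R"
proof -
  let ?F = "path_set n R s" and ?P = "path_set n R s - {x}"
  note rc = path_set_rows_cols[OF d n]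
  have F: "?F \<in> facets (Delta' n)" using facets_Delta'_iff_path[OF n] d by blast
  have fP: "face n ?P" using face_subset[OF path_set_facet(1)[OF d]] by blast
  have sx: "snd x \<in> {1..n} - R" using rc(2) x by blast
  have "snd x \<notin> snd ` ?P"
  proof
    assume "snd x \<in> snd ` ?P"
    then obtain y where "snd x = snd y" "y \<in> ?P" by (rule imageE)
    then show False using only by auto
  qed
  moreover have "snd x \<notin> fst ` ?P" using rc(1) sx by blast
  moreover have "?P \<noteq> {}" using ne x by blast
  ultimately obtain c where c: "c \<in> snd ` ?P" "face n (insert (snd x, c) ?P)"
    using face_insert_new_row[OF fP _ _] sx by (metis DiffD1)
  define G where "G = insert (snd x, c) ?P"
  have "(snd x, c) \<notin> ?P" using \<open>snd x \<notin> fst ` ?P\<close> by (metis fst_conv image_eqI)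
  then have GF: "G \<in> facets (Delta' n)" unfolding G_def using facet_replace_point[OF F n x _ c(2)] by blast
  then have "face n G" "card G = n - 1" using facets_Delta'_iff[OF n] by auto
  then have ind: "fst ` G \<union> snd ` G = {1..n}" using face_indices_eq n by blast
  have "snd ` G \<subseteq> {1..n} - R" using c(1) rc(2) by (auto simp: G_def)
  moreover have "fst ` G \<subseteq> insert (snd x) R" using rc(1) by (auto simp: G_def)
  moreover have "insert (snd x) R \<subseteq> fst ` G"
  proof
    fix r assume r: "r \<in> insert (snd x) R"
    show "r \<in> fst ` G"
    proof (cases "r = snd x")
      case True
      then show ?thesis by (simp add: G_def)
    next
      case False
      then have "r \<in> {1..n}" "r \<notin> snd ` G"
        using r d \<open>snd ` G \<subseteq> {1..n} - R\<close> by (auto simp: is_path_def)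
      then show ?thesis using ind by blast
    qed
  qed
  ultimately have "fst ` G = insert (snd x) R" by (meson subset_antisym)
  moreover have "?P \<subseteq> G" by (auto simp: G_def)
  ultimately show ?thesis using GF by blast
qed

lemma facet_without_row:
  assumes d: "is_path n R s" and n: "n \<ge> 2" and x: "x \<in> path_set n R s"
    and only: "\<forall>y\<in>path_set n R s. fst y = fst x \<longrightarrow> y = x" and ne: "path_set n R s \<noteq> {x}"
  shows "\<exists>G\<in>facets (Delta' n). path_set n R s - {x} \<subseteq> G \<and> fst ` G = R - {fst x}"
proof -
  let ?F = "path_set n R s" and ?P = "path_set n R s - {x}"
  note rc = path_set_rows_cols[OF d n]
  have F: "?F \<in> facets (Delta' n)" using facets_Delta'_iff_path[OF n] d by blast
  have fP: "face n ?P" using face_subset[OF path_set_facet(1)[OF d]] by blast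
  have fx: "fst x \<in> R" using rc(1) x by blast
  then have "fst x \<in> {1..n}" using d by (auto simp: is_path_def)
  moreover have "fst x \<notin> fst ` ?P"
  proof
    assume "fst x \<in> fst ` ?P"
    then obtain y where "fst x = fst y" "y \<in> ?P" by (rule imageE)
    then show False using only by auto
  qed
  moreover have "fst x \<notin> snd ` ?P" using rc(2) fx by blast
  moreover have "?P \<noteq> {}" using ne x by blast
  ultimately obtain e where e: "e \<in> fst ` ?P" "face n (insert (e, fst x) ?P)"
    using face_insert_new_col[OF fP] by metis
  define G where "G = insert (e, fst x) ?P"
  have "(e, fst x) \<notin> ?P" using \<open>fst x \<notin> snd ` ?P\<close> by (metis snd_conv image_eqI)
  then have GF: "G \<in> facets (Delta' n)" unfolding G_def using facet_replace_point[OF F n x _ e(2)] by blast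
  then have "face n G" "card G = n - 1" using facets_Delta'_iff[OF n] by auto
  then have ind: "fst ` G \<union> snd ` G = {1..n}" using face_indices_eq n by blast
  have "fst ` G = fst ` ?P" using e(1) by (auto simp: G_def)
  moreover have "fst ` ?P \<subseteq> R" using rc(1) by auto
  ultimately have "fst ` G \<subseteq> R - {fst x}" using \<open>fst x \<notin> fst ` ?P\<close> by blast
  moreover have "R - {fst x} \<subseteq> fst ` G"
  proof
    fix r assume r: "r \<in> R - {fst x}"
    moreover have "R \<subseteq> {1..n}" using d by (simp add: is_path_def)
    moreover have "snd ` G \<subseteq> insert (fst x) ({1..n} - R)" using rc(2) by (auto simp: G_def)
    ultimately show "r \<in> fst ` G" using ind by blast
  qed
  ultimately have "fst ` G = R - {fst x}" by (rule subset_antisym)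
  moreover have "?P \<subseteq> G" by (auto simp: G_def)
  ultimately show ?thesis using GF by blast
qed

definition flip_turn :: "bool list \<Rightarrow> nat \<Rightarrow> bool list" where
  "flip_turn s k = take (k - 1) s @ [s ! k, s ! (k - 1)] @ drop (k + 1) s"

lemma ups_swap_adjacent: "ups (A @ [a, b] @ B) j = ups (A @ [b, a] @ B) j" if "j \<noteq> Suc (length A)"
proof (cases "j \<le> length A")
  case True then show ?thesis by (simp add: ups_def)
next
  case False
  then have j: "j \<ge> length A + 2" using that by simp
  define m where "m = j - length A - 2"
  have jm: "j = length A + Suc (Suc m)" using j by (simp add: m_def)
  have "take j (A @ [a, b] @ B) = A @ [a, b] @ take m B"
    "take j (A @ [b, a] @ B) = A @ [b, a] @ take m B" unfolding jm by simp_all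
  then show ?thesis by (cases a; cases b) (simp_all add: ups_def)
qed

lemma rights_swap_adjacent: "rights (A @ [a, b] @ B) j = rights (A @ [b, a] @ B) j" if "j \<noteq> Suc (length A)"
proof (cases "j \<le> length A")
  case True then show ?thesis by (simp add: rights_def)
next
  case False
  then have j: "j \<ge> length A + 2" using that by simp
  define m where "m = j - length A - 2"
  have jm: "j = length A + Suc (Suc m)" using j by (simp add: m_def)
  have "take j (A @ [a, b] @ B) = A @ [a, b] @ take m B"
    "take j (A @ [b, a] @ B) = A @ [b, a] @ take m B" unfolding jm by simp_all
  then show ?thesis by (cases a; cases b) (simp_all add: rights_def)
qed

lemma flip_turn_split:
  assumes "0 < k" "k < length s"
  obtains A a b B where "s = A @ [a, b] @ B" "flip_turn s k = A @ [b, a] @ B" "length A = k - 1"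
    "a = s ! (k - 1)" "b = s ! k"
proof -
  have "drop (k - 1) s = [s ! (k - 1), s ! k] @ drop (k + 1) s"
    using Cons_nth_drop_Suc[of "k - 1" s] Cons_nth_drop_Suc[of k s] assms by simp
  then have "s = take (k - 1) s @ [s ! (k - 1), s ! k] @ drop (k + 1) s"
    by (metis append_take_drop_id)
  then show ?thesis by (rule that) (use assms in \<open>simp_all add: flip_turn_def\<close>)
qed

lemma flip_turn_prefix:
  assumes "0 < k" "k < length s"
  shows "length (flip_turn s k) = length s" "take (k - 1) (flip_turn s k) = take (k - 1) s"
    "flip_turn s k ! (k - 1) = s ! k"
proof -
  obtain A a b B where AB: "s = A @ [a, b] @ B" "flip_turn s k = A @ [b, a] @ B" "length A = k - 1"
    "b = s ! k"
    using flip_turn_split[OF assms] by metis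
  show "length (flip_turn s k) = length s" "take (k - 1) (flip_turn s k) = take (k - 1) s"
    unfolding AB(2) using AB(3) by (simp_all add: AB(1))
  show "flip_turn s k ! (k - 1) = s ! k" unfolding AB(2) using AB(3,4) by (simp add: nth_append)
qed

lemma flip_turn_same_point:
  assumes "0 < k" "k < length s" "j \<noteq> k"
  shows "path_point n R (flip_turn s k) j = path_point n R s j"
proof -
  obtain A a b B where AB: "s = A @ [a, b] @ B" "flip_turn s k = A @ [b, a] @ B" "length A = k - 1"
    using flip_turn_split[OF assms(1,2)] by metis
  have j: "j \<noteq> Suc (length A)" using AB(3) assms by simp
  show ?thesis unfolding path_point_def AB(2)
    using ups_swap_adjacent[OF j, of b a B] rights_swap_adjacent[OF j, of b a B] by (simp add: AB(1))
qed

lemma flip_turn: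
  assumes d: "is_path n R s" and k: "0 < k" "k < length s"
  shows "is_path n R (flip_turn s k)"
    "path_set n R s - {path_point n R s k} \<subseteq> path_set n R (flip_turn s k)"
proof -
  obtain A a b B where AB: "s = A @ [a, b] @ B" "flip_turn s k = A @ [b, a] @ B"
    using flip_turn_split[OF k] by metis
  have "length (filter id (flip_turn s k)) = length (filter id s)" unfolding AB(2) by (simp add: AB(1))
  then show "is_path n R (flip_turn s k)"
    using d flip_turn_prefix(1)[OF k] by (simp add: is_path_def is_path_steps_def)
  show "path_set n R s - {path_point n R s k} \<subseteq> path_set n R (flip_turn s k)"
  proof
    fix y assume y: "y \<in> path_set n R s - {path_point n R s k}"
    then obtain j where j: "j \<le> length s" "y = path_point n R s j" unfolding path_set_eq_image by blast
    then have "j \<noteq> k" using y by blast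
    then have "y = path_point n R (flip_turn s k) j" using j(2) flip_turn_same_point[OF k] by simp
    then show "y \<in> path_set n R (flip_turn s k)"
      unfolding path_set_eq_image flip_turn_prefix(1)[OF k] using j(1) by (intro image_eqI[of y _ j]) auto
  qed
qed

lemma steps_less_flip_left_turn:
  assumes "left_turn s k"
  shows "steps_less (flip_turn s k) s"
proof -
  have k: "0 < k" "k < length s" "\<not> s ! (k - 1)" "s ! k" using assms by (auto simp: left_turn_def)
  show ?thesis unfolding steps_less_def
    by (rule exI[of _ "k - 1"]) (use k flip_turn_prefix[OF k(1,2)] in simp)
qed

lemma steps_less_flip_right_turn:
  assumes "right_turn s k"
  shows "steps_less s (flip_turn s k)"
proof -
  have k: "0 < k" "k < length s" "s ! (k - 1)" "\<not> s ! k" using assms by (auto simp: right_turn_def)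
  show ?thesis unfolding steps_less_def
    by (rule exI[of _ "k - 1"]) (use k flip_turn_prefix[OF k(1,2)] in simp)
qed

lemma facet_less_path_set_iff:
  assumes dS: "is_path n S t" and dR: "is_path n R s" and n: "n \<ge> 2"
  shows "facet_less n (path_set n S t) (path_set n R s) \<longleftrightarrow> subset_less S R \<or> (S = R \<and> steps_less t s)"
  unfolding facet_less_def block_path_set[OF dS n] block_path_set[OF dR n]
    path_of_path_set[OF dS n] path_of_path_set[OF dR n] ..

lemma facet_less_if_subset_less:
  assumes "F \<in> facets (Delta' n)" "G \<in> facets (Delta' n)" "n \<ge> 2" "subset_less (fst ` F) (fst ` G)"
  shows "facet_less n F G"
  using assms block_facet by (simp add: facet_less_def)

lemma left_turn_covered_by_earlier_facet:
  assumes d: "is_path n R s" and n: "n \<ge> 2" and turn: "left_turn s k"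
  shows "\<exists>G\<in>facets (Delta' n). facet_less n G (path_set n R s)
    \<and> path_set n R s - {path_point n R s k} \<subseteq> G"
proof -
  have "0 < k" "k < length s" using turn by (auto simp: left_turn_def)
  note t = flip_turn[OF d this]
  have "path_set n R (flip_turn s k) \<in> facets (Delta' n)" using facets_Delta'_iff_path[OF n] t(1) by blast
  moreover have "facet_less n (path_set n R (flip_turn s k)) (path_set n R s)"
    using facet_less_path_set_iff[OF t(1) d n] steps_less_flip_left_turn[OF turn] by simp
  ultimately show ?thesis using t(2) by blast
qed

lemma right_turn_covered_by_later_facet:
  assumes d: "is_path n R s" and n: "n \<ge> 2" and turn: "right_turn s k"
  shows "\<exists>G\<in>facets (Delta' n). facet_less n (path_set n R s) G
    \<and> path_set n R s - {path_point n R s k} \<subseteq> G"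
proof -
  have "0 < k" "k < length s" using turn by (auto simp: right_turn_def)
  note t = flip_turn[OF d this]
  have "path_set n R (flip_turn s k) \<in> facets (Delta' n)" using facets_Delta'_iff_path[OF n] t(1) by blast
  moreover have "facet_less n (path_set n R s) (path_set n R (flip_turn s k))"
    using facet_less_path_set_iff[OF d t(1) n] steps_less_flip_right_turn[OF turn] by simp
  ultimately show ?thesis using t(2) by blast
qed

lemma minus_part_covered_by_earlier_facet:
  assumes d: "is_path n R s" and n: "n \<ge> 2" and x: "x \<in> minus_part n (path_set n R s)"
    and ne: "path_set n R s \<noteq> {x}"
  shows "\<exists>G\<in>facets (Delta' n). facet_less n G (path_set n R s) \<and> path_set n R s - {x} \<subseteq> G"
proof -
  let ?F = "path_set n R s"
  have F: "?F \<in> facets (Delta' n)" using facets_Delta'_iff_path[OF n] d by blast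
  have finR: "finite R" and R: "R \<noteq> {}" using d by (auto simp: is_path_def finite_subset)
  obtain k where k: "k \<le> length s" "x = path_point n R s k" "minus_point n R s k"
    using x unfolding minus_part_path_set[OF d n] by blast
  have xF: "x \<in> ?F" using k unfolding path_set_eq_image by blast
  from k(3) consider (turn) "left_turn s k"
    | (col) "bullet_pt s (path_walk R s) k" "snd x < Max R"
    | (row) "circle_pt s (path_walk R s) k" "fst x = Max R"
    unfolding minus_point_def k(2) by blast
  then show ?thesis
  proof cases
    case turn
    then show ?thesis using left_turn_covered_by_earlier_facet[OF d n] k(2) by blast
  next
    case col
    have "\<forall>y\<in>?F. snd y = snd x \<longrightarrow> y = x"
      using only_in_col_unique[OF d k(1)] col(1) k(2) by (simp add: bullet_pt_def)
    then obtain G where G: "G \<in> facets (Delta' n)" "?F - {x} \<subseteq> G" "fst ` G = insert (snd x) R"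
      using facet_with_new_row[OF d n xF _ ne] by blast
    have "snd x \<notin> R" using path_point_mem(4)[OF d k(1)] k(2) by simp
    then have "subset_less (fst ` G) (fst ` ?F)"
      using subset_less_insert_below_Max[OF finR _ col(2) R] G(3) path_set_rows_cols(1)[OF d n] by simp
    then show ?thesis using facet_less_if_subset_less[OF G(1) F n] G(1,2) by blast
  next
    case row
    have "\<forall>y\<in>?F. fst y = fst x \<longrightarrow> y = x"
      using only_in_row_unique[OF d k(1)] row(1) k(2) by (simp add: circle_pt_def)
    then obtain G where G: "G \<in> facets (Delta' n)" "?F - {x} \<subseteq> G" "fst ` G = R - {fst x}"
      using facet_without_row[OF d n xF _ ne] by blast
    have "card G = n - 1" using G(1) facets_Delta'_iff[OF n] by blast
    then have "G \<noteq> {}" using n by auto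
    then obtain g where "g \<in> G" by blast
    then have "{fst g, Max R} \<subseteq> R" "fst g \<noteq> Max R" using G(3) row(2) Max_in[OF finR R] by auto
    then have "card R \<ge> 2" using card_mono[OF finR, of "{fst g, Max R}"] by simp
    then have "subset_less (fst ` G) (fst ` ?F)"
      using subset_less_remove_Max[OF finR] G(3) row(2) path_set_rows_cols(1)[OF d n] by simp
    then show ?thesis using facet_less_if_subset_less[OF G(1) F n] G(1,2) by blast
  qed
qed

lemma plus_part_covered_by_later_facet:
  assumes d: "is_path n R s" and n: "n \<ge> 2" and x: "x \<in> plus_part n (path_set n R s)"
    and ne: "path_set n R s \<noteq> {x}"
  shows "\<exists>G\<in>facets (Delta' n). facet_less n (path_set n R s) G \<and> path_set n R s - {x} \<subseteq> G"
proof -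
  let ?F = "path_set n R s"
  have F: "?F \<in> facets (Delta' n)" using facets_Delta'_iff_path[OF n] d by blast
  have finR: "finite R" and R: "R \<noteq> {}" using d by (auto simp: is_path_def finite_subset)
  obtain k where k: "k \<le> length s" "x = path_point n R s k" "\<not> minus_point n R s k"
    using x path_point_in_minus_part[OF d n] unfolding plus_part_def path_set_eq_image by blast
  have xF: "x \<in> ?F" using k unfolding path_set_eq_image by blast
  have "length s \<noteq> 0" using ne k(1,2) unfolding path_set_eq_image by auto
  then consider (turn) "right_turn s k" | (col) "bullet_pt s (path_walk R s) k"
    | (row) "circle_pt s (path_walk R s) k"
    using point_types[OF d k(1)] k(3) unfolding minus_point_def by blast
  then show ?thesis
  proof cases
    case turn
    then show ?thesis using right_turn_covered_by_later_facet[OF d n] k(2) by blast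
  next
    case col
    have "\<forall>y\<in>?F. snd y = snd x \<longrightarrow> y = x"
      using only_in_col_unique[OF d k(1)] col k(2) by (simp add: bullet_pt_def)
    then obtain G where G: "G \<in> facets (Delta' n)" "?F - {x} \<subseteq> G" "fst ` G = insert (snd x) R"
      using facet_with_new_row[OF d n xF _ ne] by blast
    have "snd x \<notin> R" using path_point_mem(4)[OF d k(1)] k(2) by simp
    moreover have "\<not> snd x < Max R" using k(2,3) col by (simp add: minus_point_def)
    ultimately have "\<forall>r\<in>R. r < snd x" using Max_ge[OF finR] Max_in[OF finR R] by (metis le_neq_implies_less not_less le_less_trans)
    then have "subset_less (fst ` ?F) (fst ` G)"
      using subset_less_insert_above_Max[OF finR \<open>snd x \<notin> R\<close>] G(3) path_set_rows_cols(1)[OF d n] by simp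
    then show ?thesis using facet_less_if_subset_less[OF F G(1) n] G(1,2) by blast
  next
    case row
    have "\<forall>y\<in>?F. fst y = fst x \<longrightarrow> y = x"
      using only_in_row_unique[OF d k(1)] row k(2) by (simp add: circle_pt_def)
    then obtain G where G: "G \<in> facets (Delta' n)" "?F - {x} \<subseteq> G" "fst ` G = R - {fst x}"
      using facet_without_row[OF d n xF _ ne] by blast
    have "fst x \<in> R" "fst x \<noteq> Max R"
      using path_point_mem(3)[OF d k(1)] k(2,3) row by (auto simp: minus_point_def)
    then have "subset_less (fst ` ?F) (fst ` G)"
      using subset_less_remove_below_Max[OF finR] G(3) path_set_rows_cols(1)[OF d n] by simp
    then show ?thesis using facet_less_if_subset_less[OF F G(1) n] G(1,2) by blast
  qed
qed

section \<open>The shelling\<close>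

lemma gen_complex_Int_eq:
  assumes "M \<subseteq> F" and miss: "\<forall>G\<in>X. \<exists>x\<in>M. x \<notin> G" and cover: "\<forall>x\<in>M. \<exists>G\<in>X. F - {x} \<subseteq> G"
  shows "gen_complex {F} \<inter> gen_complex X = gen_complex {F - {x} | x. x \<in> M}"
proof (intro set_eqI iffI)
  fix A assume "A \<in> gen_complex {F} \<inter> gen_complex X"
  then obtain G where "A \<subseteq> F" "G \<in> X" "A \<subseteq> G" unfolding gen_complex_def by blast
  moreover from this obtain x where "x \<in> M" "x \<notin> G" using miss by blast
  ultimately show "A \<in> gen_complex {F - {x} | x. x \<in> M}" unfolding gen_complex_def by blast
next
  fix A assume "A \<in> gen_complex {F - {x} | x. x \<in> M}"
  then obtain x where "x \<in> M" "A \<subseteq> F - {x}" unfolding gen_complex_def by blast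
  moreover from this obtain G where "G \<in> X" "F - {x} \<subseteq> G" using cover by blast
  ultimately show "A \<in> gen_complex {F} \<inter> gen_complex X" unfolding gen_complex_def by blast
qed

lemma shelling_below:
  assumes n: "n \<ge> 2" and F: "F \<in> facets (Delta' n)" and ex: "\<exists>G\<in>facets (Delta' n). facet_less n G F"
  shows "gen_complex {F} \<inter> gen_complex {G \<in> facets (Delta' n). facet_less n G F}
    = gen_complex {F - {x} | x. x \<in> minus_part n F}"
proof -
  obtain R s where d: "is_path n R s" and Fe: "F = path_set n R s" using facets_Delta'_iff_path[OF n] F by blast
  show ?thesis
  proof (rule gen_complex_Int_eq)
    show "minus_part n F \<subseteq> F"
      unfolding Fe minus_part_path_set[OF d n] unfolding path_set_eq_image by blast
    show "\<forall>G\<in>{G \<in> facets (Delta' n). facet_less n G F}. \<exists>x\<in>minus_part n F. x \<notin> G"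
    proof
      fix G assume "G \<in> {G \<in> facets (Delta' n). facet_less n G F}"
      then obtain S t where dS: "is_path n S t" "G = path_set n S t" "facet_less n G F"
        using facets_Delta'_iff_path[OF n] by blast
      then show "\<exists>x\<in>minus_part n F. x \<notin> G"
        using earlier_facet_misses_minus_part[OF d dS(1) n] facet_less_path_set_iff[OF dS(1) d n] Fe by simp
    qed
    show "\<forall>x\<in>minus_part n F. \<exists>G\<in>{G \<in> facets (Delta' n). facet_less n G F}. F - {x} \<subseteq> G"
    proof
      fix x assume "x \<in> minus_part n F"
      then show "\<exists>G\<in>{G \<in> facets (Delta' n). facet_less n G F}. F - {x} \<subseteq> G"
        using minus_part_covered_by_earlier_facet[OF d n, of x] ex Fe by (cases "F = {x}") auto
    qed
  qed
qed

lemma shelling_above: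
  assumes n: "n \<ge> 2" and F: "F \<in> facets (Delta' n)" and ex: "\<exists>G\<in>facets (Delta' n). facet_less n F G"
  shows "gen_complex {F} \<inter> gen_complex {G \<in> facets (Delta' n). facet_less n F G}
    = gen_complex {F - {x} | x. x \<in> plus_part n F}"
proof -
  obtain R s where d: "is_path n R s" and Fe: "F = path_set n R s" using facets_Delta'_iff_path[OF n] F by blast
  show ?thesis
  proof (rule gen_complex_Int_eq)
    show "plus_part n F \<subseteq> F" unfolding plus_part_def by blast
    show "\<forall>G\<in>{G \<in> facets (Delta' n). facet_less n F G}. \<exists>x\<in>plus_part n F. x \<notin> G"
    proof
      fix G assume "G \<in> {G \<in> facets (Delta' n). facet_less n F G}"
      then obtain S t where dS: "is_path n S t" "G = path_set n S t" "facet_less n F G"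
        using facets_Delta'_iff_path[OF n] by blast
      then show "\<exists>x\<in>plus_part n F. x \<notin> G"
        using later_facet_misses_plus_part[OF d dS(1) n] facet_less_path_set_iff[OF d dS(1) n] Fe by simp
    qed
    show "\<forall>x\<in>plus_part n F. \<exists>G\<in>{G \<in> facets (Delta' n). facet_less n F G}. F - {x} \<subseteq> G"
    proof
      fix x assume "x \<in> plus_part n F"
      then show "\<exists>G\<in>{G \<in> facets (Delta' n). facet_less n F G}. F - {x} \<subseteq> G"
        using plus_part_covered_by_later_facet[OF d n, of x] ex Fe by (cases "F = {x}") auto
    qed
  qed
qed

theorem proposition4p7:
  fixes n :: nat
  assumes "n \<ge> 2"
  shows "(\<forall>F\<in>facets (Delta' n). (\<exists>G\<in>facets (Delta' n). facet_less n G F) \<longrightarrow>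
            gen_complex {F} \<inter> gen_complex {G \<in> facets (Delta' n). facet_less n G F}
              = gen_complex {F - {x} | x. x \<in> minus_part n F})
       \<and> (\<forall>F\<in>facets (Delta' n). (\<exists>G\<in>facets (Delta' n). facet_less n F G) \<longrightarrow>
            gen_complex {F} \<inter> gen_complex {G \<in> facets (Delta' n). facet_less n F G}
              = gen_complex {F - {x} | x. x \<in> plus_part n F})"
  using shelling_below[OF assms] shelling_above[OF assms] by blast

end
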